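(* Consider the equation $w_{1,2}+w_{0,2}w_{0,3}=0$ for $w=w(z_1,z_2)$, where $w_{k,l}:=\partial^{k+l}w/\partial z_1^k\partial z_2^l$. A differential function $\alpha$ depending only on $z_1,z_2$ and the parametric derivatives $w_{k,l}$, $k\in\mathbb N_0$, $l\in\{0,1,2\}$, satisfies $\hat{\mathrm D}_2\alpha=0$ (i.e., is a $z_2$-integral of the equation) if and only if it is a sufficiently smooth function of $z_1$ and finitely many of the quantities $\zeta^{ik}:=\mathrm D_1^kI^i$, $i=1,2$, $k\in\mathbb N_0$, i.e., \[ \alpha=\alpha(z_1,I^1,\mathrm D_1I^1,\dots,\mathrm D_1^rI^1,I^2,\mathrm D_1I^2,\dots,\mathrm D_1^rI^2)\quad\text{for some } r\in\mathbb N, \] where $I^1:=w_{1,1}+\frac12(w_{0,2})^2$ and $I^2:=w_{2,0}-\frac13(w_{0,2})^3-z_2\mathrm D_1I^1$.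
   Context: $\mathrm D_1,\mathrm D_2$ are the total derivative operators with respect to $z_1,z_2$. The equation is solved for $w_{0,3}$; derivatives $w_{k,l}$ with $l\geqslant3$ are principal and those with $l\leqslant2$ are parametric. $\hat{\mathrm D}_1,\hat{\mathrm D}_2$ denote the restrictions of $\mathrm D_1,\mathrm D_2$ to the infinite-order solution manifold of the equation, i.e., the total derivatives acting on functions of $z_1,z_2$ and parametric derivatives, where any principal derivative appearing is replaced by its expression via the equation and its differential consequences. *)

theory Defs
  imports "HOL-Analysis.Analysis"
begin

text \<open>Jet coordinates: z1, z2 and w_{k,l}. A jet point is a map coord => real;
  the space carries the product topology (Function_Topology).\<close>
datatype coord = Z1 | Z2 | W nat nat

definition pd :: "'a \<Rightarrow> (('a \<Rightarrow> real) \<Rightarrow> real) \<Rightarrow> ('a \<Rightarrow> real) \<Rightarrow> real" where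
  "pd c f p = deriv (\<lambda>t. f (p(c := t))) (p c)"

fun iter_pd :: "'a list \<Rightarrow> (('a \<Rightarrow> real) \<Rightarrow> real) \<Rightarrow> ('a \<Rightarrow> real) \<Rightarrow> real" where
  "iter_pd [] f = f"
| "iter_pd (c # cs) f = pd c (iter_pd cs f)"

definition smooth_on :: "('a \<Rightarrow> real) set \<Rightarrow> (('a \<Rightarrow> real) \<Rightarrow> real) \<Rightarrow> bool" where
  "smooth_on U f \<longleftrightarrow>
     (\<forall>cs. continuous_on U (iter_pd cs f) \<and>
        (\<forall>c. \<forall>p\<in>U. (\<lambda>t. iter_pd cs f (p(c := t))) differentiable (at (p c))))"

definition depends_upto :: "nat \<Rightarrow> ((coord \<Rightarrow> real) \<Rightarrow> real) \<Rightarrow> bool" where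
  "depends_upto N f \<longleftrightarrow>
     (\<forall>p q. p Z1 = q Z1 \<and> p Z2 = q Z2 \<and>
            (\<forall>k l. k \<le> N \<and> l \<le> 2 \<longrightarrow> p (W k l) = q (W k l)) \<longrightarrow> f p = f q)"

text \<open>Restricted total derivative D1-hat on functions of order <= N (w_{k+1,l}, l <= 2, stays parametric).\<close>
definition hatD1 :: "nat \<Rightarrow> ((coord \<Rightarrow> real) \<Rightarrow> real) \<Rightarrow> (coord \<Rightarrow> real) \<Rightarrow> real" where
  "hatD1 N f p = pd Z1 f p + (\<Sum>k\<le>N. \<Sum>l\<le>2. p (W (Suc k) l) * pd (W k l) f p)"

text \<open>The principal derivatives w_{k,3} = D1-hat^k (w_{0,3}) expressed through parametric ones,
  with w_{0,3} = - w_{1,2} / w_{0,2} from the equation w_{1,2} + w_{0,2} w_{0,3} = 0.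
  (w3 k has order <= k+1.)\<close>
fun w3 :: "nat \<Rightarrow> (coord \<Rightarrow> real) \<Rightarrow> real" where
  "w3 0 = (\<lambda>p. - p (W 1 2) / p (W 0 2))"
| "w3 (Suc k) = hatD1 (Suc k) (w3 k)"

definition hatD2 :: "nat \<Rightarrow> ((coord \<Rightarrow> real) \<Rightarrow> real) \<Rightarrow> (coord \<Rightarrow> real) \<Rightarrow> real" where
  "hatD2 N f p = pd Z2 f p +
     (\<Sum>k\<le>N. p (W k 1) * pd (W k 0) f p + p (W k 2) * pd (W k 1) f p
              + w3 k p * pd (W k 2) f p)"

text \<open>I^1 = w_{1,1} + (w_{0,2})^2/2 and zeta1 k = D1^k I^1 (order <= k+1).\<close>
definition I1 :: "(coord \<Rightarrow> real) \<Rightarrow> real" where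
  "I1 p = p (W 1 1) + (p (W 0 2))^2 / 2"

fun zeta1 :: "nat \<Rightarrow> (coord \<Rightarrow> real) \<Rightarrow> real" where
  "zeta1 0 = I1"
| "zeta1 (Suc k) = hatD1 (Suc k) (zeta1 k)"

text \<open>I^2 = w_{2,0} - (w_{0,2})^3/3 - z2 D1 I^1 and zeta2 k = D1^k I^2 (order <= k+2).\<close>
definition I2 :: "(coord \<Rightarrow> real) \<Rightarrow> real" where
  "I2 p = p (W 2 0) - (p (W 0 2))^3 / 3 - p Z2 * zeta1 1 p"

fun zeta2 :: "nat \<Rightarrow> (coord \<Rightarrow> real) \<Rightarrow> real" where
  "zeta2 0 = I2"
| "zeta2 (Suc k) = hatD1 (Suc k + 1) (zeta2 k)"

text \<open>Arguments (z1, zeta^{ik}, i = 1,2, k <= r) as a point of ((nat \<times> nat) option => real);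
  None is z1, Some (i,k) is zeta^{ik}; unused coordinates are 0.\<close>
definition zeta_args :: "nat \<Rightarrow> (coord \<Rightarrow> real) \<Rightarrow> (nat \<times> nat) option \<Rightarrow> real" where
  "zeta_args r q = (\<lambda>x. case x of
       None \<Rightarrow> q Z1
     | Some (i, k) \<Rightarrow> (if k \<le> r then (if i = 1 then zeta1 k q else if i = 2 then zeta2 k q else 0) else 0))"

end

theory Submission
  imports Defs
begin

(* Both directions rest on the fact that D2-hat commutes with D1-hat and kills I^1 and I^2,
   hence kills every zeta^{ik} = D1^k I^i; the "if" part is then the chain rule.
   For the "only if" part we change jet coordinates, replacing w_{j,1} by zeta^{1,j-1} and
   w_{j,0} by zeta^{2,j-2} (j <= N): these enter the zetas linearly with coefficient 1, so the
   inverse change is polynomial.  In the new coordinates D2-hat alpha = 0 is a linear equation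
   in the remaining partial derivatives of alpha whose coefficients are free jet coordinates.
   Varying w_{j+1,2} (which enters only through w_{j,3} = -w_{j+1,2}/w_{0,2} + ...) kills the
   w_{j,2}-derivatives from the top down; the rest of the equation is quadratic in w_{0,2} and
   then affine in w_{0,1}, which kills the z2-, w_{0,0}-, w_{0,1}- and w_{1,0}-derivatives.
   So on a small cylinder alpha depends only on z1 and the zetas. *)

section \<open>Functions on a product of real lines\<close>

definition cylinder :: "'a set \<Rightarrow> real \<Rightarrow> ('a \<Rightarrow> real) \<Rightarrow> ('a \<Rightarrow> real) set" where
  "cylinder C e v0 = {v. \<forall>c\<in>C. \<bar>v c - v0 c\<bar> < e}"

lemma open_cylinder: "finite C \<Longrightarrow> open (cylinder C e v0)"
proof -
  assume "finite C"
  then have "open {f. \<forall>i\<in>C. f (id i) \<in> {v0 i - e <..< v0 i + e}}"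
    by (rule product_topology_basis') auto
  moreover have "{f. \<forall>i\<in>C. f (id i) \<in> {v0 i - e <..< v0 i + e}} = cylinder C e v0"
    unfolding cylinder_def by (auto simp: abs_less_iff)
  ultimately show ?thesis by simp
qed

lemma centre_in_cylinder: "e > 0 \<Longrightarrow> v0 \<in> cylinder C e v0"
  by (simp add: cylinder_def)

lemma fun_upd_in_cylinder_iff:
  "v \<in> cylinder C e v0 \<Longrightarrow> v(c := s) \<in> cylinder C e v0 \<longleftrightarrow> (c \<in> C \<longrightarrow> \<bar>s - v0 c\<bar> < e)"
  unfolding cylinder_def by auto

lemma if_in_cylinder:
  "v \<in> cylinder C e v0 \<Longrightarrow> w \<in> cylinder C e v0 \<Longrightarrow> (\<lambda>x. if P x then v x else w x) \<in> cylinder C e v0"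
  unfolding cylinder_def by auto

lemma fun_upd_closed_segment_in_cylinder:
  assumes "v \<in> cylinder C e v0" "v(c := t) \<in> cylinder C e v0" "s \<in> closed_segment (v c) t"
  shows "v(c := s) \<in> cylinder C e v0"
proof -
  have "c \<in> C \<longrightarrow> \<bar>t - v0 c\<bar> < e \<and> \<bar>v c - v0 c\<bar> < e"
    using assms(1,2) by (simp add: fun_upd_in_cylinder_iff) (simp add: cylinder_def)
  then have "c \<in> C \<longrightarrow> \<bar>s - v0 c\<bar> < e"
    using assms(3) by (auto simp: closed_segment_eq_real_ivl abs_less_iff split: if_splits)
  then show ?thesis using assms(1) by (simp add: fun_upd_in_cylinder_iff)
qed

lemma open_contains_cylinder:
  fixes U :: "('a \<Rightarrow> real) set"
  assumes "open U" "p \<in> U"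
  obtains C e where "finite C" "e > 0" "cylinder C e p \<subseteq> U"
proof -
  from product_topology_open_contains_basis[of "\<lambda>i. euclidean" UNIV U p] assms
  obtain X where X: "p \<in> (\<Pi>\<^sub>E i\<in>UNIV. X i)" "\<And>i. open (X i)"
     "finite {i. X i \<noteq> UNIV}" "(\<Pi>\<^sub>E i\<in>UNIV. X i) \<subseteq> U"
    by (auto simp: open_fun_def)
  define C where "C = {i. X i \<noteq> UNIV}"
  have "\<forall>i\<in>C. \<exists>d>0. ball (p i) d \<subseteq> X i"
    using X(1,2) by (auto simp: open_contains_ball PiE_iff)
  then obtain d where d: "\<And>i. i \<in> C \<Longrightarrow> d i > 0 \<and> ball (p i) (d i) \<subseteq> X i"
    by metis
  define e where "e = Min (insert 1 (d ` C))"
  have "finite C" using X(3) by (simp add: C_def)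
  then have "e > 0" and e_le: "\<And>i. i \<in> C \<Longrightarrow> e \<le> d i"
    using d by (auto simp: e_def)
  have "v i \<in> X i" if "v \<in> cylinder C e p" for v i
  proof (cases "i \<in> C")
    case True
    then have "v i \<in> ball (p i) (d i)"
      using that e_le[OF True] by (auto simp: cylinder_def dist_real_def abs_minus_commute)
    then show ?thesis using d[OF True] by auto
  qed (auto simp: C_def)
  then have "cylinder C e p \<subseteq> U" using X(4) by (auto simp: PiE_iff)
  then show thesis using that \<open>finite C\<close> \<open>e > 0\<close> by blast
qed

lemma tendsto_fun_iff_componentwise:
  fixes f :: "'b \<Rightarrow> 'a \<Rightarrow> real"
  shows "(f \<longlongrightarrow> g) F \<longleftrightarrow> (\<forall>c. ((\<lambda>t. f t c) \<longlongrightarrow> g c) F)"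
  using limitin_componentwise[of "\<lambda>_. euclidean" UNIV f g F]
  by (simp add: euclidean_product_topology)

lemma continuous_on_fun_upd: "continuous_on UNIV (\<lambda>t::real. (p :: 'a \<Rightarrow> real)(c := t))"
proof (rule continuous_on_coordinatewise_then_product)
  show "continuous_on UNIV (\<lambda>t. (p(c := t)) i)" for i
    by (cases "i = c") simp_all
qed

lemma eventually_nhds_fun_upd:
  fixes p :: "'a \<Rightarrow> real"
  assumes "open S" "p \<in> S"
  shows "\<forall>\<^sub>F t in nhds (p c). p(c := t) \<in> S"
proof -
  have "open ((\<lambda>t. p(c := t)) -` S)"
    using continuous_on_fun_upd assms(1) by (rule open_vimage[rotated])
  moreover have "p c \<in> (\<lambda>t. p(c := t)) -` S" using assms(2) by simp
  ultimately show ?thesis unfolding eventually_nhds by blast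
qed

lemma pd_cong_open:
  assumes "open S" "p \<in> S" "\<And>q. q \<in> S \<Longrightarrow> f q = g q"
  shows "pd c f p = pd c g p"
  unfolding pd_def
  by (rule deriv_cong_ev[OF _ refl])
    (use eventually_nhds_fun_upd[OF assms(1,2), of c] assms(3) in \<open>elim eventually_mono, simp\<close>)

lemma pd_eqI:
  "((\<lambda>t. f (p(c := t))) has_real_derivative D) (at (p c)) \<Longrightarrow> pd c f p = D"
  unfolding pd_def by (rule DERIV_imp_deriv)

lemma has_real_derivative_pd:
  "(\<lambda>t. f (p(c := t))) differentiable (at (p c)) \<Longrightarrow>
    ((\<lambda>t. f (p(c := t))) has_real_derivative pd c f p) (at (p c))"
  unfolding pd_def by (simp add: DERIV_deriv_iff_real_differentiable)

lemma mvt_closed_segment: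
  fixes g :: "real \<Rightarrow> real"
  assumes "\<And>s. s \<in> closed_segment a b \<Longrightarrow> (g has_real_derivative g' s) (at s)"
  shows "\<exists>\<xi>\<in>closed_segment a b. g b - g a = g' \<xi> * (b - a)"
proof (cases a b rule: linorder_cases)
  case less
  with MVT2[of a b g g'] assms show ?thesis
    by (auto simp: closed_segment_eq_real_ivl mult.commute)
next
  case greater
  with MVT2[of b a g g'] assms obtain \<xi> where "b < \<xi>" "\<xi> < a" "g a - g b = (a - b) * g' \<xi>"
    by (auto simp: closed_segment_eq_real_ivl)
  then show ?thesis
    by (intro bexI[of _ \<xi>]) (auto simp: closed_segment_eq_real_ivl algebra_simps)
qed simp

definition partially_C1_on :: "'a set \<Rightarrow> ('a \<Rightarrow> real) set \<Rightarrow> (('a \<Rightarrow> real) \<Rightarrow> real) \<Rightarrow> bool" where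
  "partially_C1_on S U f \<longleftrightarrow>
     (\<forall>c\<in>S. continuous_on U (pd c f) \<and> (\<forall>p\<in>U. (\<lambda>t. f (p(c := t))) differentiable (at (p c))))"

lemma partially_C1_on_subset: "partially_C1_on S U f \<Longrightarrow> S' \<subseteq> S \<Longrightarrow> partially_C1_on S' U f"
  unfolding partially_C1_on_def by blast

lemma mvt_fun_upd:
  fixes F :: "('a \<Rightarrow> real) \<Rightarrow> real"
  assumes "partially_C1_on {x} U F" "\<And>s. s \<in> closed_segment a (w x) \<Longrightarrow> w(x := s) \<in> U"
  shows "\<exists>\<xi>\<in>closed_segment a (w x). F w - F (w(x := a)) = pd x F (w(x := \<xi>)) * (w x - a)"
proof -
  have "((\<lambda>s. F (w(x := s))) has_real_derivative pd x F (w(x := s))) (at s)"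
    if "s \<in> closed_segment a (w x)" for s
  proof -
    have "(\<lambda>t. F ((w(x := s))(x := t))) differentiable (at ((w(x := s)) x))"
      using assms that unfolding partially_C1_on_def by blast
    from has_real_derivative_pd[OF this] show ?thesis
      by (simp only: fun_upd_upd fun_upd_same)
  qed
  from mvt_closed_segment[of a "w x", OF this] show ?thesis
    by (simp only: fun_upd_triv)
qed

lemma tendsto_fun_upd_closed_segment:
  fixes \<gamma> :: "'b \<Rightarrow> 'a \<Rightarrow> real"
  assumes "(\<gamma> \<longlongrightarrow> g) F" "\<forall>\<^sub>F t in F. \<xi> t \<in> closed_segment (g x) (\<gamma> t x)"
  shows "((\<lambda>t. (\<gamma> t)(x := \<xi> t)) \<longlongrightarrow> g) F"
proof -
  have \<gamma>_coord: "((\<lambda>t. \<gamma> t c) \<longlongrightarrow> g c) F" for c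
    using assms(1) by (simp add: tendsto_fun_iff_componentwise)
  have "\<forall>\<^sub>F t in F. norm (\<xi> t - g x) \<le> \<bar>\<gamma> t x - g x\<bar>"
    using assms(2) by (elim eventually_mono) (auto dest: segment_bound1)
  moreover have "((\<lambda>t. \<bar>\<gamma> t x - g x\<bar>) \<longlongrightarrow> 0) F"
    using \<gamma>_coord[of x] by (simp add: LIM_zero tendsto_rabs_zero_iff)
  ultimately have "((\<lambda>t. \<xi> t - g x) \<longlongrightarrow> 0) F"
    by (rule Lim_null_comparison)
  then have "(\<xi> \<longlongrightarrow> g x) F"
    by (rule LIM_zero_cancel)
  then show ?thesis
    unfolding tendsto_fun_iff_componentwise
  proof (intro allI)
    fix c
    show "((\<lambda>t. ((\<gamma> t)(x := \<xi> t)) c) \<longlongrightarrow> g c) F"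
      using \<open>(\<xi> \<longlongrightarrow> g x) F\<close> \<gamma>_coord[of c] by (cases "c = x") simp_all
  qed
qed

lemma DERIV_fun_upd_increment:
  fixes F :: "('a \<Rightarrow> real) \<Rightarrow> real" and \<gamma> :: "real \<Rightarrow> 'a \<Rightarrow> real"
  assumes "open U" "\<gamma> t0 \<in> U" "partially_C1_on {x} U F"
    and \<gamma>_lim: "(\<gamma> \<longlongrightarrow> \<gamma> t0) (at t0)"
    and \<gamma>_x: "((\<lambda>t. \<gamma> t x) has_real_derivative \<gamma>'x) (at t0)"
  shows "((\<lambda>t. F (\<gamma> t) - F ((\<gamma> t)(x := \<gamma> t0 x))) has_real_derivative pd x F (\<gamma> t0) * \<gamma>'x) (at t0)"
proof -
  define a where "a = \<gamma> t0 x"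
  obtain C e where C: "finite C" "e > 0" "cylinder C e (\<gamma> t0) \<subseteq> U"
    using open_contains_cylinder[OF assms(1,2)] by blast
  define Q where "Q t \<xi> \<longleftrightarrow> \<xi> \<in> closed_segment a (\<gamma> t x) \<and>
      F (\<gamma> t) - F ((\<gamma> t)(x := a)) = pd x F ((\<gamma> t)(x := \<xi>)) * (\<gamma> t x - a)" for t \<xi>
  have "\<exists>\<xi>. Q t \<xi>" if t: "\<gamma> t \<in> cylinder C e (\<gamma> t0)" for t
  proof -
    have a: "(\<gamma> t)(x := a) \<in> cylinder C e (\<gamma> t0)"
      using t C(2) by (simp add: fun_upd_in_cylinder_iff a_def)
    have "(\<gamma> t)(x := s) \<in> U" if "s \<in> closed_segment a (\<gamma> t x)" for s
      using fun_upd_closed_segment_in_cylinder[OF t a] that C(3) by (auto simp: closed_segment_commute)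
    from mvt_fun_upd[OF assms(3) this] show ?thesis
      unfolding Q_def by blast
  qed
  moreover have "\<forall>\<^sub>F t in at t0. \<gamma> t \<in> cylinder C e (\<gamma> t0)"
    using topological_tendstoD[OF \<gamma>_lim open_cylinder[OF C(1)] centre_in_cylinder[OF C(2)]] .
  ultimately have evQ: "\<forall>\<^sub>F t in at t0. Q t (SOME \<xi>. Q t \<xi>)"
    by (elim eventually_mono) (rule someI_ex)
  define \<xi> where "\<xi> t = (SOME \<xi>. Q t \<xi>)" for t
  have "((\<lambda>t. (\<gamma> t)(x := \<xi> t)) \<longlongrightarrow> \<gamma> t0) (at t0)"
    by (intro tendsto_fun_upd_closed_segment[OF \<gamma>_lim])
      (use evQ in \<open>elim eventually_mono, auto simp: Q_def \<xi>_def a_def\<close>)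
  then have "((\<lambda>t. pd x F ((\<gamma> t)(x := \<xi> t))) \<longlongrightarrow> pd x F (\<gamma> t0)) (at t0)"
    using continuous_on_tendsto_compose[OF _ _ assms(2)] topological_tendstoD[OF _ assms(1,2)] assms(3)
    unfolding partially_C1_on_def by blast
  moreover have "((\<lambda>t. (\<gamma> t x - a) / (t - t0)) \<longlongrightarrow> \<gamma>'x) (at t0)"
    using \<gamma>_x by (simp add: a_def has_field_derivative_iff)
  ultimately have "((\<lambda>t. pd x F ((\<gamma> t)(x := \<xi> t)) * ((\<gamma> t x - a) / (t - t0)))
      \<longlongrightarrow> pd x F (\<gamma> t0) * \<gamma>'x) (at t0)"
    by (rule tendsto_mult)
  then show ?thesis
    unfolding has_field_derivative_iff
    by (rule Lim_transform_eventually)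
      (use evQ in \<open>elim eventually_mono, simp add: Q_def \<xi>_def a_def\<close>)
qed

lemma tendsto_if_DERIV_coordinates:
  fixes \<gamma> :: "real \<Rightarrow> 'a \<Rightarrow> real"
  assumes "\<And>t x. x \<notin> S \<Longrightarrow> \<gamma> t x = \<gamma> t0 x"
    and "\<And>x. x \<in> S \<Longrightarrow> ((\<lambda>t. \<gamma> t x) has_real_derivative \<gamma>' x) (at t0)"
  shows "(\<gamma> \<longlongrightarrow> \<gamma> t0) (at t0)"
  unfolding tendsto_fun_iff_componentwise
proof
  fix y
  show "((\<lambda>t. \<gamma> t y) \<longlongrightarrow> \<gamma> t0 y) (at t0)"
  proof (cases "y \<in> S")
    case True
    then show ?thesis using DERIV_isCont[OF assms(2)] by (simp add: isCont_def)
  next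
    case False
    then have "(\<lambda>t. \<gamma> t y) = (\<lambda>t. \<gamma> t0 y)" using assms(1) by blast
    then show ?thesis by simp
  qed
qed

lemma DERIV_chain_finite_coordinates:
  fixes F :: "('a \<Rightarrow> real) \<Rightarrow> real" and \<gamma> :: "real \<Rightarrow> 'a \<Rightarrow> real"
  assumes "finite S" "open U" "\<gamma> t0 \<in> U" "partially_C1_on S U F"
    and "\<And>t x. x \<notin> S \<Longrightarrow> \<gamma> t x = \<gamma> t0 x"
    and "\<And>x. x \<in> S \<Longrightarrow> ((\<lambda>t. \<gamma> t x) has_real_derivative \<gamma>' x) (at t0)"
  shows "((\<lambda>t. F (\<gamma> t)) has_real_derivative (\<Sum>x\<in>S. pd x F (\<gamma> t0) * \<gamma>' x)) (at t0)"
  using assms(1,3-)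
proof (induction S arbitrary: \<gamma> rule: finite_induct)
  case empty
  then have "\<gamma> t = \<gamma> t0" for t by (intro ext) blast
  then have "(\<lambda>t. F (\<gamma> t)) = (\<lambda>t. F (\<gamma> t0))" by metis
  then show ?case by simp
next
  case (insert x S)
  define \<delta> where "\<delta> t = (\<gamma> t)(x := \<gamma> t0 x)" for t
  have "((\<lambda>t. F (\<delta> t)) has_real_derivative (\<Sum>y\<in>S. pd y F (\<delta> t0) * \<gamma>' y)) (at t0)"
  proof (rule insert.IH)
    show "partially_C1_on S U F"
      using insert.prems(2) by (rule partially_C1_on_subset) auto
    show "((\<lambda>t. \<delta> t y) has_real_derivative \<gamma>' y) (at t0)" if "y \<in> S" for y
    proof -
      have "y \<noteq> x" using that insert.hyps(2) by blast
      then show ?thesis using that insert.prems(4)[of y] by (simp add: \<delta>_def)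
    qed
    show "\<delta> t0 \<in> U"
      using insert.prems(1) by (simp add: \<delta>_def)
    show "\<delta> t y = \<delta> t0 y" if "y \<notin> S" for t y
      using that insert.prems(3)[of y t] by (simp add: \<delta>_def)
  qed
  moreover have "((\<lambda>t. F (\<gamma> t) - F (\<delta> t)) has_real_derivative pd x F (\<gamma> t0) * \<gamma>' x) (at t0)"
    unfolding \<delta>_def
  proof (rule DERIV_fun_upd_increment[where U = U])
    show "open U" "\<gamma> t0 \<in> U" by (fact assms(2), fact insert.prems(1))
    show "partially_C1_on {x} U F"
      using insert.prems(2) by (rule partially_C1_on_subset) auto
    show "((\<lambda>t. \<gamma> t x) has_real_derivative \<gamma>' x) (at t0)"
      by (rule insert.prems(4)) simp
    show "(\<gamma> \<longlongrightarrow> \<gamma> t0) (at t0)"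
      using insert.prems(3,4) by (rule tendsto_if_DERIV_coordinates)
  qed
  ultimately have "((\<lambda>t. (F (\<gamma> t) - F (\<delta> t)) + F (\<delta> t)) has_real_derivative
      pd x F (\<gamma> t0) * \<gamma>' x + (\<Sum>y\<in>S. pd y F (\<delta> t0) * \<gamma>' y)) (at t0)"
    by (intro DERIV_add)
  then show ?case using insert.hyps by (simp add: \<delta>_def)
qed

lemma fun_upd_eq_if_pd_eq_0_on_cylinder:
  fixes f :: "('a \<Rightarrow> real) \<Rightarrow> real"
  assumes "\<And>w. w \<in> cylinder C e v0 \<Longrightarrow> (\<lambda>t. f (w(c := t))) differentiable (at (w c))"
    and "\<And>w. w \<in> cylinder C e v0 \<Longrightarrow> pd c f w = 0"
    and "v \<in> cylinder C e v0" "v(c := t) \<in> cylinder C e v0"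
  shows "f (v(c := t)) = f v"
proof -
  have "((\<lambda>s. f (v(c := s))) has_real_derivative 0) (at s within closed_segment (v c) t)"
    if "s \<in> closed_segment (v c) t" for s
  proof -
    have s: "v(c := s) \<in> cylinder C e v0"
      using fun_upd_closed_segment_in_cylinder[OF assms(3,4) that] .
    have "((\<lambda>u. f ((v(c := s))(c := u))) has_real_derivative pd c f (v(c := s))) (at ((v(c := s)) c))"
      by (rule has_real_derivative_pd[OF assms(1)[OF s]])
    then have "((\<lambda>s. f (v(c := s))) has_real_derivative 0) (at s)"
      using assms(2)[OF s] by simp
    then show ?thesis by (rule has_field_derivative_at_within)
  qed
  then obtain K where "\<forall>s\<in>closed_segment (v c) t. f (v(c := s)) = K"
    using has_field_derivative_zero_constant[OF convex_closed_segment] by blast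
  then show ?thesis by (metis ends_in_segment fun_upd_triv)
qed

lemma pd_fun_upd_eq_if_pd_eq_0_on_cylinder:
  fixes f :: "('a \<Rightarrow> real) \<Rightarrow> real"
  assumes "finite C"
    and "\<And>w. w \<in> cylinder C e v0 \<Longrightarrow> (\<lambda>t. f (w(d := t))) differentiable (at (w d))"
    and "\<And>w. w \<in> cylinder C e v0 \<Longrightarrow> pd d f w = 0"
    and "v \<in> cylinder C e v0" "v(d := t) \<in> cylinder C e v0" "c \<noteq> d"
  shows "pd c f (v(d := t)) = pd c f v"
proof -
  have t: "d \<in> C \<longrightarrow> \<bar>t - v0 d\<bar> < e"
    using assms(4,5) by (simp add: fun_upd_in_cylinder_iff)
  have "\<forall>\<^sub>F s in nhds (v c). f ((v(d := t))(c := s)) = f (v(c := s))"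
    using eventually_nhds_fun_upd[OF open_cylinder[OF assms(1)] assms(4), of c]
  proof (elim eventually_mono)
    fix s assume s: "v(c := s) \<in> cylinder C e v0"
    then have "(v(c := s))(d := t) \<in> cylinder C e v0"
      using t by (simp add: fun_upd_in_cylinder_iff)
    then have "f ((v(c := s))(d := t)) = f (v(c := s))"
      using fun_upd_eq_if_pd_eq_0_on_cylinder[where f = f and c = d and v = "v(c := s)"] assms(2,3) s
      by blast
    then show "f ((v(d := t))(c := s)) = f (v(c := s))"
      using assms(6) by (simp add: fun_upd_twist)
  qed
  then show ?thesis
    unfolding pd_def using assms(6) by (simp add: deriv_cong_ev)
qed

lemma quadratic_eventually_zero:
  fixes a b c t0 :: real
  assumes "\<forall>\<^sub>F t in nhds t0. a + b * t + c * t\<^sup>2 = 0"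
  shows "b = 0 \<and> c = 0"
proof -
  obtain d where "d > 0" and d: "\<And>t. dist t t0 < d \<Longrightarrow> a + b * t + c * t\<^sup>2 = 0"
    using assms unfolding eventually_nhds_metric by blast
  define h where "h = d / 2"
  have "h > 0" using \<open>d > 0\<close> by (simp add: h_def)
  have q0: "a + b * t0 + c * t0\<^sup>2 = 0" and q1: "a + b * (t0 + h) + c * (t0 + h)\<^sup>2 = 0"
    and q2: "a + b * (t0 - h) + c * (t0 - h)\<^sup>2 = 0"
    using d \<open>d > 0\<close> by (auto simp: h_def dist_real_def)
  have "(a + b * (t0 + h) + c * (t0 + h)\<^sup>2) + (a + b * (t0 - h) + c * (t0 - h)\<^sup>2)
      - 2 * (a + b * t0 + c * t0\<^sup>2) = 2 * c * h\<^sup>2"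
    by (simp add: algebra_simps power2_eq_square)
  then have "c = 0" using q0 q1 q2 \<open>h > 0\<close> by simp
  have "(a + b * (t0 + h) + c * (t0 + h)\<^sup>2) - (a + b * (t0 - h) + c * (t0 - h)\<^sup>2) = 2 * b * h + 4 * c * t0 * h"
    by (simp add: algebra_simps power2_eq_square)
  then have "2 * b * h + 4 * c * t0 * h = 0" using q1 q2 by linarith
  then have "b = 0" using \<open>c = 0\<close> \<open>h > 0\<close> by simp
  with \<open>c = 0\<close> show ?thesis by simp
qed

lemma DERIV_eq_0_if_eventually_0:
  fixes f :: "real \<Rightarrow> real"
  assumes "\<forall>\<^sub>F t in nhds x. f t = 0" "(f has_real_derivative D) (at x)"
  shows "D = 0"
proof -
  have "((\<lambda>t. 0) has_real_derivative D) (at x)"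
    using DERIV_cong_ev[OF refl assms(1) refl] assms(2) by simp
  then show ?thesis using DERIV_const DERIV_unique by blast
qed

section \<open>Smooth functions\<close>

lemma smooth_on_imp_continuous_on: "smooth_on U f \<Longrightarrow> continuous_on U f"
  unfolding smooth_on_def by (metis iter_pd.simps(1))

lemma smooth_on_imp_partially_C1_on:
  assumes "smooth_on U f"
  shows "partially_C1_on S U f"
proof -
  have "continuous_on U (iter_pd [c] f)"
    "\<forall>p\<in>U. (\<lambda>t. iter_pd [] f (p(c := t))) differentiable (at (p c))" for c
    using assms unfolding smooth_on_def by blast+
  then show ?thesis unfolding partially_C1_on_def by simp
qed

lemma smooth_on_pd:
  assumes "smooth_on U f"
  shows "smooth_on U (pd c f)"
proof -
  have "iter_pd (cs @ [c]) f = iter_pd cs (pd c f)" for cs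
    by (induction cs) auto
  with assms show ?thesis
    unfolding smooth_on_def by metis
qed

lemma differentiable_fun_upd_cong_open:
  fixes f g :: "('a \<Rightarrow> real) \<Rightarrow> real"
  assumes "open U" "p \<in> U" "\<And>q. q \<in> U \<Longrightarrow> f q = g q"
    and "(\<lambda>t. g (p(c := t))) differentiable (at (p c))"
  shows "(\<lambda>t. f (p(c := t))) differentiable (at (p c))"
proof -
  have "\<forall>\<^sub>F t in nhds (p c). f (p(c := t)) = g (p(c := t))"
    using eventually_nhds_fun_upd[OF assms(1,2), of c] by (elim eventually_mono) (rule assms(3))
  note DERIV_cong = DERIV_cong_ev[OF refl this refl]
  obtain D where "((\<lambda>t. g (p(c := t))) has_real_derivative D) (at (p c))"
    using assms(4) unfolding real_differentiable_def by blast
  then have "((\<lambda>t. f (p(c := t))) has_real_derivative D) (at (p c))"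
    using DERIV_cong by simp
  then show ?thesis unfolding real_differentiable_def by blast
qed

lemma smooth_onI_iter_pd:
  assumes "open U"
    and "\<And>cs. \<exists>g. (\<forall>u\<in>U. iter_pd cs f u = g u) \<and> continuous_on U g \<and>
                  (\<forall>c. \<forall>p\<in>U. (\<lambda>t. g (p(c := t))) differentiable (at (p c)))"
  shows "smooth_on U f"
  unfolding smooth_on_def
proof (intro allI conjI ballI)
  fix cs
  obtain g where g: "\<And>u. u \<in> U \<Longrightarrow> iter_pd cs f u = g u" "continuous_on U g"
    "\<And>c p. p \<in> U \<Longrightarrow> (\<lambda>t. g (p(c := t))) differentiable (at (p c))"
    using assms(2)[of cs] by blast
  have "continuous_on U (iter_pd cs f) \<longleftrightarrow> continuous_on U g"
    by (rule continuous_on_cong) (simp_all add: g(1))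
  then show "continuous_on U (iter_pd cs f)" using g(2) by blast
  show "(\<lambda>t. iter_pd cs f (p(c := t))) differentiable (at (p c))" if "p \<in> U" for c p
    using assms(1) that g(1) g(3)[OF that] by (rule differentiable_fun_upd_cong_open)
qed

lemma DERIV_linear_combination_iter_pd:
  assumes "\<And>x. x \<in> K \<Longrightarrow> smooth_on U (f x)" "u \<in> U"
  shows "((\<lambda>t. \<Sum>x\<in>K. a x * iter_pd cs (f x) (u(c := t))) has_real_derivative
      (\<Sum>x\<in>K. a x * pd c (iter_pd cs (f x)) u)) (at (u c))"
proof (rule DERIV_sum)
  fix x assume "x \<in> K"
  then have "(\<lambda>t. iter_pd cs (f x) (u(c := t))) differentiable (at (u c))"
    using assms unfolding smooth_on_def by blast
  from has_real_derivative_pd[OF this]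
  show "((\<lambda>t. a x * iter_pd cs (f x) (u(c := t))) has_real_derivative
      a x * pd c (iter_pd cs (f x)) u) (at (u c))"
    by (rule DERIV_cmult)
qed

lemma iter_pd_linear_combination:
  assumes "open U" "\<And>x. x \<in> K \<Longrightarrow> smooth_on U (f x)"
  shows "\<forall>u\<in>U. iter_pd cs (\<lambda>u. \<Sum>x\<in>K. a x * f x u) u = (\<Sum>x\<in>K. a x * iter_pd cs (f x) u)"
proof (induction cs)
  case (Cons c cs)
  show ?case
  proof
    fix u assume u: "u \<in> U"
    have "iter_pd (c # cs) (\<lambda>u. \<Sum>x\<in>K. a x * f x u) u =
        pd c (\<lambda>u. \<Sum>x\<in>K. a x * iter_pd cs (f x) u) u"
      unfolding iter_pd.simps by (rule pd_cong_open[OF assms(1) u]) (use Cons.IH in blast)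
    also have "\<dots> = (\<Sum>x\<in>K. a x * pd c (iter_pd cs (f x)) u)"
      by (rule pd_eqI[OF DERIV_linear_combination_iter_pd[OF assms(2) u]])
    finally show "iter_pd (c # cs) (\<lambda>u. \<Sum>x\<in>K. a x * f x u) u =
        (\<Sum>x\<in>K. a x * iter_pd (c # cs) (f x) u)"
      by simp
  qed
qed simp

lemma smooth_on_linear_combination:
  assumes "open U" "\<And>x. x \<in> K \<Longrightarrow> smooth_on U (f x)"
  shows "smooth_on U (\<lambda>u. \<Sum>x\<in>K. a x * f x u)"
proof (rule smooth_onI_iter_pd[OF assms(1)])
  fix cs
  have "continuous_on U (\<lambda>u. a x * iter_pd cs (f x) u)" if "x \<in> K" for x
    using assms(2)[OF that] unfolding smooth_on_def by (blast intro: continuous_on_mult_left)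
  then have "continuous_on U (\<lambda>u. \<Sum>x\<in>K. a x * iter_pd cs (f x) u)"
    by (rule continuous_on_sum)
  moreover have "(\<lambda>t. \<Sum>x\<in>K. a x * iter_pd cs (f x) (p(c := t))) differentiable (at (p c))"
    if "p \<in> U" for c p
  proof -
    have "((\<lambda>t. \<Sum>x\<in>K. a x * iter_pd cs (f x) (p(c := t))) has_real_derivative
        (\<Sum>x\<in>K. a x * pd c (iter_pd cs (f x)) p)) (at (p c))"
      by (rule DERIV_linear_combination_iter_pd[OF assms(2) that])
    then show ?thesis unfolding real_differentiable_def by blast
  qed
  moreover have "\<forall>u\<in>U. iter_pd cs (\<lambda>u. \<Sum>x\<in>K. a x * f x u) u = (\<Sum>x\<in>K. a x * iter_pd cs (f x) u)"
    by (rule iter_pd_linear_combination[OF assms])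
  ultimately show "\<exists>g. (\<forall>u\<in>U. iter_pd cs (\<lambda>u. \<Sum>x\<in>K. a x * f x u) u = g u) \<and> continuous_on U g \<and>
      (\<forall>c. \<forall>p\<in>U. (\<lambda>t. g (p(c := t))) differentiable (at (p c)))"
    by (intro exI[of _ "\<lambda>u. \<Sum>x\<in>K. a x * iter_pd cs (f x) u"]) blast
qed

context
  fixes S :: "('a \<Rightarrow> real) \<Rightarrow> 'b \<Rightarrow> real" and A :: "'b \<Rightarrow> 'a \<Rightarrow> real" and K :: "'b set"
  assumes continuous_S: "continuous_on UNIV S"
    and finite_K: "finite K"
    and slope_outside_K: "\<And>x d. x \<notin> K \<Longrightarrow> A x d = 0"
    and affine_on_lines: "\<And>y d t. S (y(d := t)) = (\<lambda>x. S y x + (t - y d) * A x d)"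
begin

lemma open_vimage_affine:
  assumes "open U"
  shows "open (S -` U)"
  using assms continuous_S by (rule open_vimage)

lemma DERIV_comp_affine:
  assumes "open U" "partially_C1_on K U g" "S y \<in> U"
  shows "((\<lambda>t. g (S (y(d := t)))) has_real_derivative (\<Sum>x\<in>K. pd x g (S y) * A x d)) (at (y d))"
proof -
  have "((\<lambda>t. g (S (y(d := t)))) has_real_derivative
      (\<Sum>x\<in>K. pd x g (S (y(d := y d))) * A x d)) (at (y d))"
  proof (rule DERIV_chain_finite_coordinates[where U = U])
    show "S (y(d := t)) x = S (y(d := y d)) x" if "x \<notin> K" for t x
      using slope_outside_K[OF that] by (simp add: affine_on_lines)
    show "((\<lambda>t. S (y(d := t)) x) has_real_derivative A x d) (at (y d))" for x
      unfolding affine_on_lines by (auto intro!: derivative_eq_intros)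
  qed (use assms finite_K in auto)
  then show ?thesis by simp
qed

lemma iter_pd_comp_affine:
  assumes "open U" "smooth_on U g"
  shows "\<exists>h. smooth_on U h \<and> (\<forall>y\<in>S -` U. iter_pd cs (\<lambda>y. g (S y)) y = h (S y))"
proof (induction cs)
  case Nil
  show ?case using assms(2) by auto
next
  case (Cons c cs)
  then obtain h where h: "smooth_on U h" "\<forall>y\<in>S -` U. iter_pd cs (\<lambda>y. g (S y)) y = h (S y)"
    by blast
  define h' where "h' u = (\<Sum>x\<in>K. A x c * pd x h u)" for u
  have "smooth_on U h'"
    unfolding h'_def by (intro smooth_on_linear_combination[OF assms(1)] smooth_on_pd h(1))
  moreover have "iter_pd (c # cs) (\<lambda>y. g (S y)) y = h' (S y)" if y: "y \<in> S -` U" for y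
  proof -
    have "iter_pd (c # cs) (\<lambda>y. g (S y)) y = pd c (\<lambda>y. h (S y)) y"
      unfolding iter_pd.simps
      by (rule pd_cong_open[OF open_vimage_affine[OF assms(1)] y]) (use h(2) in blast)
    also have "\<dots> = (\<Sum>x\<in>K. pd x h (S y) * A x c)"
      using y smooth_on_imp_partially_C1_on[OF h(1)]
      by (intro pd_eqI DERIV_comp_affine[OF assms(1)]) auto
    also have "\<dots> = h' (S y)"
      by (simp add: h'_def mult.commute)
    finally show ?thesis .
  qed
  ultimately show ?case by blast
qed

lemma smooth_on_comp_affine:
  assumes "open U" "smooth_on U g"
  shows "smooth_on (S -` U) (\<lambda>y. g (S y))"
proof (rule smooth_onI_iter_pd[OF open_vimage_affine[OF assms(1)]])
  fix cs
  obtain h where h: "smooth_on U h" "\<forall>y\<in>S -` U. iter_pd cs (\<lambda>y. g (S y)) y = h (S y)"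
    using iter_pd_comp_affine[OF assms] by blast
  have "continuous_on (S -` U) S"
    using continuous_S by (rule continuous_on_subset) simp
  then have "continuous_on (S -` U) (\<lambda>y. h (S y))"
    by (rule continuous_on_compose2[OF smooth_on_imp_continuous_on[OF h(1)]]) auto
  moreover have "(\<lambda>t. h (S (p(c := t)))) differentiable (at (p c))" if "p \<in> S -` U" for c p
    using DERIV_comp_affine[OF assms(1) smooth_on_imp_partially_C1_on[OF h(1)]] that
    unfolding real_differentiable_def by blast
  ultimately show "\<exists>g'. (\<forall>y\<in>S -` U. iter_pd cs (\<lambda>y. g (S y)) y = g' y) \<and> continuous_on (S -` U) g' \<and>
      (\<forall>c. \<forall>p\<in>S -` U. (\<lambda>t. g' (p(c := t))) differentiable (at (p c)))"
    using h(2) by (intro exI[of _ "\<lambda>y. h (S y)"]) blast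
qed

end

section \<open>Rational expressions in the jet coordinates\<close>

text \<open>Polynomials in the jet coordinates and \<open>1 / w\<^sub>0\<^sub>,\<^sub>2\<close>.  All functions of the argument
  (the principal derivatives \<open>w\<^sub>k\<^sub>,\<^sub>3\<close>, the \<open>\<zeta>\<close>'s and the change of coordinates) have this form,
  and formal differentiation computes their partial and total derivatives.\<close>

datatype jexpr = Const real | Var coord | Add jexpr jexpr | Mul jexpr jexpr | Recip_w02

fun jeval :: "jexpr \<Rightarrow> (coord \<Rightarrow> real) \<Rightarrow> real" where
  "jeval (Const r) p = r"
| "jeval (Var c) p = p c"
| "jeval (Add a b) p = jeval a p + jeval b p"
| "jeval (Mul a b) p = jeval a p * jeval b p"
| "jeval Recip_w02 p = inverse (p (W 0 2))"

fun jvars :: "jexpr \<Rightarrow> coord set" where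
  "jvars (Const r) = {}"
| "jvars (Var c) = {c}"
| "jvars (Add a b) = jvars a \<union> jvars b"
| "jvars (Mul a b) = jvars a \<union> jvars b"
| "jvars Recip_w02 = {W 0 2}"

fun jdiff :: "coord \<Rightarrow> jexpr \<Rightarrow> jexpr" where
  "jdiff c (Const r) = Const 0"
| "jdiff c (Var d) = Const (if c = d then 1 else 0)"
| "jdiff c (Add a b) = Add (jdiff c a) (jdiff c b)"
| "jdiff c (Mul a b) = Add (Mul (jdiff c a) b) (Mul a (jdiff c b))"
| "jdiff c Recip_w02 = (if c = W 0 2 then Mul (Const (-1)) (Mul Recip_w02 Recip_w02) else Const 0)"

definition nondeg_jets :: "(coord \<Rightarrow> real) set" where
  "nondeg_jets = {p. p (W 0 2) \<noteq> 0}"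

lemma open_nondeg_jets: "open nondeg_jets"
  unfolding nondeg_jets_def by (rule open_Collect_neq) (auto intro: continuous_intros)

lemma finite_jvars [simp]: "finite (jvars e)"
  by (induction e) auto

lemma jeval_cong: "(\<And>c. c \<in> jvars e \<Longrightarrow> p c = q c) \<Longrightarrow> jeval e p = jeval e q"
  by (induction e) auto

lemma jeval_jdiff_notin_jvars: "c \<notin> jvars e \<Longrightarrow> jeval (jdiff c e) p = 0"
  by (induction e) auto

lemma DERIV_jeval:
  assumes "p \<in> nondeg_jets"
  shows "((\<lambda>t. jeval e (p(c := t))) has_real_derivative jeval (jdiff c e) p) (at (p c))"
proof (induction e)
  case (Var d)
  show ?case by (cases "c = d") auto
next
  case (Mul a b)
  from DERIV_mult[OF Mul.IH] show ?case by (simp add: algebra_simps)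
next
  case Recip_w02
  show ?case
  proof (cases "c = W 0 2")
    case True
    have "(inverse has_real_derivative - (inverse (p c) * inverse (p c))) (at (p c))"
      using DERIV_inverse[of "p c"] assms True by (simp add: nondeg_jets_def)
    then show ?thesis using True by simp
  qed simp
qed (auto intro: DERIV_add)

lemma pd_jeval: "p \<in> nondeg_jets \<Longrightarrow> pd c (jeval e) p = jeval (jdiff c e) p"
  by (rule pd_eqI[OF DERIV_jeval])

lemma continuous_on_jeval: "continuous_on nondeg_jets (jeval e)"
proof (induction e)
  case (Var c)
  show ?case by (simp add: continuous_on_product_then_coordinatewise[OF continuous_on_id])
next
  case Recip_w02
  show ?case unfolding nondeg_jets_def jeval.simps
    by (intro continuous_on_inverse continuous_on_product_then_coordinatewise[OF continuous_on_id]) auto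
qed (auto intro: continuous_intros)

lemma DERIV_comp_jexpr_map:
  fixes g :: "('b \<Rightarrow> real) \<Rightarrow> real" and \<Phi> :: "(coord \<Rightarrow> real) \<Rightarrow> 'b \<Rightarrow> real"
  assumes "open U" "finite K" "partially_C1_on K U g" "v \<in> nondeg_jets" "\<Phi> v \<in> U"
    and "\<And>y t. y \<notin> K \<Longrightarrow> \<Phi> (v(c := t)) y = \<Phi> v y"
    and "\<And>y q. y \<in> K \<Longrightarrow> q \<in> nondeg_jets \<Longrightarrow> \<Phi> q y = jeval (E y) q"
  shows "((\<lambda>t. g (\<Phi> (v(c := t)))) has_real_derivative
           (\<Sum>y\<in>K. pd y g (\<Phi> v) * jeval (jdiff c (E y)) v)) (at (v c))"
proof -
  have "((\<lambda>t. g (\<Phi> (v(c := t)))) has_real_derivative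
      (\<Sum>y\<in>K. pd y g (\<Phi> (v(c := v c))) * jeval (jdiff c (E y)) v)) (at (v c))"
  proof (rule DERIV_chain_finite_coordinates[where U = U])
    show "((\<lambda>t. \<Phi> (v(c := t)) y) has_real_derivative jeval (jdiff c (E y)) v) (at (v c))"
      if "y \<in> K" for y
    proof -
      have "\<forall>\<^sub>F t in nhds (v c). \<Phi> (v(c := t)) y = jeval (E y) (v(c := t))"
        using eventually_nhds_fun_upd[OF open_nondeg_jets assms(4), of c]
        by (elim eventually_mono) (rule assms(7)[OF that])
      from DERIV_cong_ev[OF refl this refl] show ?thesis
        using DERIV_jeval[OF assms(4)] by simp
    qed
    show "\<Phi> (v(c := t)) y = \<Phi> (v(c := v c)) y" if "y \<notin> K" for t y
      using assms(6)[OF that, of t] by simp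
  qed (use assms in auto)
  then show ?thesis by simp
qed

fun jderiv :: "(coord \<Rightarrow> jexpr) \<Rightarrow> jexpr \<Rightarrow> jexpr" where
  "jderiv dv (Const r) = Const 0"
| "jderiv dv (Var c) = dv c"
| "jderiv dv (Add a b) = Add (jderiv dv a) (jderiv dv b)"
| "jderiv dv (Mul a b) = Add (Mul (jderiv dv a) b) (Mul a (jderiv dv b))"
| "jderiv dv Recip_w02 = Mul (Mul (Const (-1)) (Mul Recip_w02 Recip_w02)) (dv (W 0 2))"

lemma jeval_jderiv:
  assumes "finite C" "jvars e \<subseteq> C"
  shows "jeval (jderiv dv e) p = (\<Sum>c\<in>C. jeval (dv c) p * jeval (jdiff c e) p)"
  using assms(2)
proof (induction e)
  case (Var d)
  have "(\<Sum>c\<in>C. jeval (dv c) p * jeval (jdiff c (Var d)) p) = (\<Sum>c\<in>C. if c = d then jeval (dv d) p else 0)"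
    by (rule sum.cong) auto
  also have "\<dots> = jeval (dv d) p" using Var assms(1) by (simp add: sum.delta')
  finally show ?case by simp
next
  case (Add a b)
  then show ?case by (simp add: sum.distrib distrib_left)
next
  case (Mul a b)
  then show ?case
    by (simp add: sum.distrib sum_distrib_left sum_distrib_right algebra_simps)
next
  case Recip_w02
  have "(\<Sum>c\<in>C. jeval (dv c) p * jeval (jdiff c Recip_w02) p) =
      (\<Sum>c\<in>C. if c = W 0 2 then - jeval (dv (W 0 2)) p * (inverse (p (W 0 2)))\<^sup>2 else 0)"
    by (rule sum.cong) (auto simp: power2_eq_square)
  also have "\<dots> = - jeval (dv (W 0 2)) p * (inverse (p (W 0 2)))\<^sup>2"
    using Recip_w02 assms(1) by (simp add: sum.delta')
  finally show ?case by (simp add: power2_eq_square)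
qed simp

lemma jvars_jderiv: "jvars (jderiv dv e) \<subseteq> jvars e \<union> (\<Union>c\<in>jvars e. jvars (dv c))"
  by (induction e) auto

lemma jeval_jderiv_cong:
  assumes "p \<in> nondeg_jets" "\<And>q. q \<in> nondeg_jets \<Longrightarrow> jeval a q = jeval b q"
  shows "jeval (jderiv dv a) p = jeval (jderiv dv b) p"
proof -
  have "jeval (jdiff c a) p = jeval (jdiff c b) p" for c
    using pd_cong_open[OF open_nondeg_jets assms(1), of "jeval a" "jeval b"] assms(2)
    by (simp add: pd_jeval[OF assms(1)])
  then show ?thesis
    using jeval_jderiv[of "jvars a \<union> jvars b" a dv p] jeval_jderiv[of "jvars a \<union> jvars b" b dv p]
    by simp
qed

section \<open>The total derivatives\<close>

fun D1_var :: "coord \<Rightarrow> jexpr" where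
  "D1_var Z1 = Const 1"
| "D1_var Z2 = Const 0"
| "D1_var (W k l) = (if l \<le> 2 then Var (W (Suc k) l) else Const 0)"

abbreviation jD1 :: "jexpr \<Rightarrow> jexpr" where
  "jD1 \<equiv> jderiv D1_var"

fun w3_expr :: "nat \<Rightarrow> jexpr" where
  "w3_expr 0 = Mul (Const (-1)) (Mul (Var (W 1 2)) Recip_w02)"
| "w3_expr (Suc k) = jD1 (w3_expr k)"

fun D2_var :: "coord \<Rightarrow> jexpr" where
  "D2_var Z1 = Const 0"
| "D2_var Z2 = Const 1"
| "D2_var (W k l) =
     (if l = 0 then Var (W k 1) else if l = 1 then Var (W k 2) else if l = 2 then w3_expr k else Const 0)"

abbreviation jD2 :: "jexpr \<Rightarrow> jexpr" where
  "jD2 \<equiv> jderiv D2_var"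

text \<open>This holds identically because \<open>w3_expr (Suc k)\<close> is defined as \<open>jD1 (w3_expr k)\<close>.\<close>

lemma jD1_jD2_commute: "jeval (jD1 (jD2 e)) p = jeval (jD2 (jD1 e)) p"
proof (induction e)
  case (Var c)
  then show ?case
  proof (cases c)
    case (W k l)
    then show ?thesis by (cases "l = 0"; cases "l = 1"; cases "l = 2") auto
  qed auto
next
  case (Mul a b)
  then show ?case by (simp add: algebra_simps)
next
  case Recip_w02
  show ?case by (simp add: algebra_simps)
qed auto

definition param_coords :: "nat \<Rightarrow> coord set" where
  "param_coords M = (\<lambda>(k, l). W k l) ` ({..M} \<times> {..2})"

definition jet_coords :: "nat \<Rightarrow> coord set" where
  "jet_coords M = insert Z1 (insert Z2 (param_coords M))"

definition w2_coords :: "nat \<Rightarrow> coord set" where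
  "w2_coords m = (\<lambda>j. W j 2) ` {..m}"

lemma mem_param_coords: "c \<in> param_coords M \<longleftrightarrow> (\<exists>k l. c = W k l \<and> k \<le> M \<and> l \<le> 2)"
  unfolding param_coords_def by auto

lemma mem_jet_coords: "c \<in> jet_coords M \<longleftrightarrow> c = Z1 \<or> c = Z2 \<or> (\<exists>k l. c = W k l \<and> k \<le> M \<and> l \<le> 2)"
  unfolding jet_coords_def insert_iff mem_param_coords by blast

lemma finite_param_coords [simp]: "finite (param_coords M)"
  unfolding param_coords_def by simp

lemma finite_jet_coords [simp]: "finite (jet_coords M)"
  unfolding jet_coords_def by simp

lemma Z_notin_param_coords [simp]: "Z1 \<notin> param_coords M" "Z2 \<notin> param_coords M"
  unfolding param_coords_def by auto

lemma jet_coords_mono: "m \<le> n \<Longrightarrow> jet_coords m \<subseteq> jet_coords n"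
  by (auto simp: mem_jet_coords)

lemma w2_coords_subset_jet_coords: "w2_coords m \<subseteq> jet_coords m"
  by (auto simp: w2_coords_def mem_jet_coords)

lemma sum_param_coords: "(\<Sum>k\<le>M. \<Sum>l\<le>(2::nat). f (W k l)) = (\<Sum>c\<in>param_coords M. f c)"
proof -
  have "inj_on (\<lambda>(k, l). W k l) ({..M} \<times> {..2::nat})"
    by (auto simp: inj_on_def)
  then have "(\<Sum>c\<in>param_coords M. f c) = (\<Sum>(k, l)\<in>{..M} \<times> {..2::nat}. f (W k l))"
    unfolding param_coords_def by (subst sum.reindex) (simp_all add: case_prod_beta)
  then show ?thesis by (simp add: sum.cartesian_product)
qed

lemma sum_le_2: "(\<Sum>l\<le>(2::nat). g l) = g 0 + g 1 + (g 2 :: real)"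
  by (simp add: numeral_2_eq_2 atMost_Suc)

lemma sum_jet_coords:
  "(\<Sum>c\<in>jet_coords N. f c) = f Z1 + f Z2 + (\<Sum>k\<le>N. f (W k 0) + f (W k 1) + (f (W k 2) :: real))"
proof -
  have "(\<Sum>c\<in>jet_coords N. f c) = f Z1 + (f Z2 + (\<Sum>c\<in>param_coords N. f c))"
    unfolding jet_coords_def by (simp add: sum.insert)
  also have "(\<Sum>c\<in>param_coords N. f c) = (\<Sum>k\<le>N. \<Sum>l\<le>(2::nat). f (W k l))"
    by (rule sum_param_coords[symmetric])
  finally show ?thesis by (simp add: sum_le_2 add.assoc)
qed

lemma hatD1_jeval:
  assumes "p \<in> nondeg_jets" "\<And>q. q \<in> nondeg_jets \<Longrightarrow> f q = jeval e q" "jvars e \<subseteq> jet_coords M"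
  shows "hatD1 M f p = jeval (jD1 e) p"
proof -
  have pd_f: "pd c f p = jeval (jdiff c e) p" for c
    using pd_cong_open[OF open_nondeg_jets assms(1), of f "jeval e" c] assms(2) pd_jeval[OF assms(1)]
    by simp
  have "hatD1 M f p = pd Z1 f p + (\<Sum>k\<le>M. \<Sum>l\<le>(2::nat). jeval (D1_var (W k l)) p * pd (W k l) f p)"
    unfolding hatD1_def by simp
  also have "\<dots> = jeval (jdiff Z1 e) p + (\<Sum>c\<in>param_coords M. jeval (D1_var c) p * jeval (jdiff c e) p)"
    unfolding pd_f using sum_param_coords[of "\<lambda>c. jeval (D1_var c) p * jeval (jdiff c e) p" M]
    by simp
  also have "\<dots> = (\<Sum>c\<in>jet_coords M. jeval (D1_var c) p * jeval (jdiff c e) p)"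
    unfolding jet_coords_def by simp
  also have "\<dots> = jeval (jD1 e) p"
    by (rule jeval_jderiv[symmetric, OF finite_jet_coords assms(3)])
  finally show ?thesis .
qed

lemma jvars_jD1_w2_coords: "jvars e \<subseteq> w2_coords m \<Longrightarrow> jvars (jD1 e) \<subseteq> w2_coords (Suc m)"
proof -
  assume e: "jvars e \<subseteq> w2_coords m"
  have "jvars (D1_var c) \<subseteq> w2_coords (Suc m)" if "c \<in> w2_coords m" for c
    using that by (auto simp: w2_coords_def)
  moreover have "w2_coords m \<subseteq> w2_coords (Suc m)"
    by (auto simp: w2_coords_def)
  ultimately show ?thesis
    using jvars_jderiv[of D1_var e] e by blast
qed

lemma jvars_w3_expr: "jvars (w3_expr k) \<subseteq> w2_coords (Suc k)"
  by (induction k) (auto simp: w2_coords_def intro!: jvars_jD1_w2_coords[simplified w2_coords_def])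

lemma w3_eq_jeval: "p \<in> nondeg_jets \<Longrightarrow> w3 k p = jeval (w3_expr k) p"
proof (induction k arbitrary: p)
  case 0
  then show ?case by (simp add: divide_inverse)
next
  case (Suc k)
  have "jvars (w3_expr k) \<subseteq> jet_coords (Suc k)"
    using jvars_w3_expr w2_coords_subset_jet_coords by blast
  with Suc show ?case by (simp add: hatD1_jeval)
qed

lemma jeval_jdiff_top_jD1:
  assumes "jvars e \<subseteq> jet_coords m" "l \<le> 2"
  shows "jeval (jdiff (W (Suc m) l) (jD1 e)) p = jeval (jdiff (W m l) e) p"
  using assms(1)
proof (induction e)
  case (Var c)
  then show ?case using assms(2) by (cases c) (auto simp: mem_jet_coords)
next
  case (Mul a b)
  have "W (Suc m) l \<notin> jvars a" "W (Suc m) l \<notin> jvars b"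
    using Mul.prems by (auto simp: mem_jet_coords)
  with Mul show ?case by (simp add: jeval_jdiff_notin_jvars)
qed auto

lemma jeval_jdiff_top_w3_expr: "jeval (jdiff (W (Suc k) 2) (w3_expr k)) p = - inverse (p (W 0 2))"
proof (induction k)
  case (Suc k)
  have "jvars (w3_expr k) \<subseteq> jet_coords (Suc k)"
    using jvars_w3_expr w2_coords_subset_jet_coords by blast
  with Suc show ?case by (simp add: jeval_jdiff_top_jD1)
qed simp

lemma hatD2_eq_sum:
  assumes "p \<in> nondeg_jets"
  shows "hatD2 M f p = (\<Sum>c\<in>insert Z2 (param_coords M). jeval (D2_var c) p * pd c f p)"
proof -
  have "(\<Sum>k\<le>M. p (W k 1) * pd (W k 0) f p + p (W k 2) * pd (W k 1) f p + w3 k p * pd (W k 2) f p) =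
      (\<Sum>k\<le>M. \<Sum>l\<le>(2::nat). jeval (D2_var (W k l)) p * pd (W k l) f p)"
    by (intro sum.cong refl) (simp add: sum_le_2 w3_eq_jeval[OF assms])
  also have "\<dots> = (\<Sum>c\<in>param_coords M. jeval (D2_var c) p * pd c f p)"
    by (rule sum_param_coords)
  finally show ?thesis
    unfolding hatD2_def by simp
qed

lemma sum_D2_var_jdiff:
  assumes "jvars e \<subseteq> jet_coords M"
  shows "(\<Sum>c\<in>insert Z2 (param_coords M). jeval (D2_var c) p * jeval (jdiff c e) p) = jeval (jD2 e) p"
proof -
  have "jeval (jD2 e) p = (\<Sum>c\<in>jet_coords M. jeval (D2_var c) p * jeval (jdiff c e) p)"
    by (rule jeval_jderiv[OF finite_jet_coords assms])
  then show ?thesis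
    unfolding jet_coords_def by simp
qed

lemma hatD2_chain_jexpr:
  assumes "p \<in> nondeg_jets" "finite Y" "\<And>y. y \<in> Y \<Longrightarrow> jvars (E y) \<subseteq> jet_coords M"
    and "\<And>x. x \<in> insert Z2 (param_coords M) \<Longrightarrow> pd x f p = (\<Sum>y\<in>Y. a y * jeval (jdiff x (E y)) p)"
  shows "hatD2 M f p = (\<Sum>y\<in>Y. a y * jeval (jD2 (E y)) p)"
proof -
  let ?X = "insert Z2 (param_coords M)"
  have "hatD2 M f p = (\<Sum>x\<in>?X. \<Sum>y\<in>Y. a y * (jeval (D2_var x) p * jeval (jdiff x (E y)) p))"
    unfolding hatD2_eq_sum[OF assms(1)]
    by (rule sum.cong[OF refl]) (simp add: assms(4) sum_distrib_left algebra_simps)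
  also have "\<dots> = (\<Sum>y\<in>Y. a y * (\<Sum>x\<in>?X. jeval (D2_var x) p * jeval (jdiff x (E y)) p))"
    by (subst sum.swap) (simp only: sum_distrib_left)
  also have "\<dots> = (\<Sum>y\<in>Y. a y * jeval (jD2 (E y)) p)"
    by (rule sum.cong[OF refl]) (simp only: sum_D2_var_jdiff[OF assms(3)])
  finally show ?thesis .
qed

section \<open>The integrals \<open>\<zeta>\<close>\<close>

fun P_expr :: "nat \<Rightarrow> jexpr" where
  "P_expr 0 = Mul (Const (1/2)) (Mul (Var (W 0 2)) (Var (W 0 2)))"
| "P_expr (Suc k) = jD1 (P_expr k)"

fun Q_expr :: "nat \<Rightarrow> jexpr" where
  "Q_expr 0 = Mul (Const (1/3)) (Mul (Var (W 0 2)) (Mul (Var (W 0 2)) (Var (W 0 2))))"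
| "Q_expr (Suc k) = jD1 (Q_expr k)"

definition zeta1_expr :: "nat \<Rightarrow> jexpr" where
  "zeta1_expr k = Add (Var (W (Suc k) 1)) (P_expr k)"

definition zeta2_expr :: "nat \<Rightarrow> jexpr" where
  "zeta2_expr k = Add (Var (W (Suc (Suc k)) 0))
     (Add (Mul (Const (-1)) (Q_expr k)) (Mul (Const (-1)) (Mul (Var Z2) (zeta1_expr (Suc k)))))"

lemma jD1_zeta1_expr: "jD1 (zeta1_expr k) = zeta1_expr (Suc k)"
  by (simp add: zeta1_expr_def)

lemma jeval_jD1_zeta2_expr: "jeval (jD1 (zeta2_expr k)) p = jeval (zeta2_expr (Suc k)) p"
  by (simp add: zeta2_expr_def zeta1_expr_def)

lemma jvars_P_expr: "jvars (P_expr k) \<subseteq> w2_coords k"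
  by (induction k) (simp_all add: w2_coords_def jvars_jD1_w2_coords[unfolded w2_coords_def])

lemma jvars_Q_expr: "jvars (Q_expr k) \<subseteq> w2_coords k"
  by (induction k) (simp_all add: w2_coords_def jvars_jD1_w2_coords[unfolded w2_coords_def])

lemma jvars_P_expr_jet_coords: "k \<le> m \<Longrightarrow> jvars (P_expr k) \<subseteq> jet_coords m"
  using jvars_P_expr w2_coords_subset_jet_coords jet_coords_mono by blast

lemma jvars_Q_expr_jet_coords: "k \<le> m \<Longrightarrow> jvars (Q_expr k) \<subseteq> jet_coords m"
  using jvars_Q_expr w2_coords_subset_jet_coords jet_coords_mono by blast

lemma jvars_zeta1_expr: "Suc k \<le> m \<Longrightarrow> jvars (zeta1_expr k) \<subseteq> jet_coords m"
  using jvars_P_expr_jet_coords[of k m] by (auto simp: zeta1_expr_def mem_jet_coords)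

lemma jvars_zeta2_expr: "Suc (Suc k) \<le> m \<Longrightarrow> jvars (zeta2_expr k) \<subseteq> jet_coords m"
  using jvars_Q_expr_jet_coords[of k m] jvars_zeta1_expr[of "Suc k" m]
  by (auto simp: zeta2_expr_def mem_jet_coords)

lemma zeta1_eq_jeval: "p \<in> nondeg_jets \<Longrightarrow> zeta1 k p = jeval (zeta1_expr k) p"
proof (induction k arbitrary: p)
  case 0
  then show ?case by (simp add: I1_def zeta1_expr_def power2_eq_square)
next
  case (Suc k)
  then have "zeta1 (Suc k) p = jeval (jD1 (zeta1_expr k)) p"
    by (simp add: hatD1_jeval jvars_zeta1_expr)
  then show ?case by (simp add: jD1_zeta1_expr)
qed

lemma zeta2_eq_jeval: "p \<in> nondeg_jets \<Longrightarrow> zeta2 k p = jeval (zeta2_expr k) p"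
proof (induction k arbitrary: p)
  case 0
  then show ?case
    using zeta1_eq_jeval[OF 0, of 1]
    by (simp add: I2_def zeta2_expr_def zeta1_expr_def power3_eq_cube numeral_2_eq_2 mult.assoc)
next
  case (Suc k)
  then have "zeta2 (Suc k) p = jeval (jD1 (zeta2_expr k)) p"
    by (simp add: hatD1_jeval jvars_zeta2_expr)
  then show ?case by (simp add: jeval_jD1_zeta2_expr)
qed

lemma jD2_zeta1_expr: "p \<in> nondeg_jets \<Longrightarrow> jeval (jD2 (zeta1_expr k)) p = 0"
proof (induction k arbitrary: p)
  case 0
  then show ?case by (simp add: zeta1_expr_def nondeg_jets_def field_simps)
next
  case (Suc k)
  have "jeval (jD2 (zeta1_expr (Suc k))) p = jeval (jD1 (jD2 (zeta1_expr k))) p"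
    by (simp add: jD1_jD2_commute jD1_zeta1_expr[symmetric])
  also have "\<dots> = jeval (jD1 (Const 0)) p"
    by (rule jeval_jderiv_cong[OF Suc.prems]) (simp add: Suc.IH)
  finally show ?case by simp
qed

lemma jD2_zeta2_expr: "p \<in> nondeg_jets \<Longrightarrow> jeval (jD2 (zeta2_expr k)) p = 0"
proof (induction k arbitrary: p)
  case 0
  then show ?case
    using jD2_zeta1_expr[OF 0, of 1]
    by (simp add: zeta2_expr_def zeta1_expr_def nondeg_jets_def field_simps numeral_2_eq_2)
next
  case (Suc k)
  have "jeval (jD2 (zeta2_expr (Suc k))) p = jeval (jD2 (jD1 (zeta2_expr k))) p"
    by (rule jeval_jderiv_cong[OF Suc.prems]) (simp add: jeval_jD1_zeta2_expr)
  also have "\<dots> = jeval (jD1 (jD2 (zeta2_expr k))) p"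
    by (simp add: jD1_jD2_commute)
  also have "\<dots> = jeval (jD1 (Const 0)) p"
    by (rule jeval_jderiv_cong[OF Suc.prems]) (simp add: Suc.IH)
  finally show ?case by simp
qed

section \<open>Functions of the \<open>\<zeta>\<close>'s are \<open>z\<^sub>2\<close>-integrals\<close>

lemma depends_upto_fun_upd:
  assumes "depends_upto N f" "c \<notin> jet_coords N"
  shows "f (p(c := t)) = f p"
  using assms unfolding depends_upto_def mem_jet_coords by (metis fun_upd_other)

lemma pd_eq_0_if_depends_upto:
  assumes "depends_upto N f" "c \<notin> jet_coords N"
  shows "pd c f p = 0"
  unfolding pd_def depends_upto_fun_upd[OF assms] by simp

lemma hatD2_mono:
  assumes "depends_upto N f" "N \<le> M" "p \<in> nondeg_jets"
  shows "hatD2 M f p = hatD2 N f p"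
proof -
  have "insert Z2 (param_coords N) \<subseteq> insert Z2 (param_coords M)"
    using assms(2) by (auto simp: mem_param_coords) (use le_trans in blast)
  moreover have "pd c f p = 0" if "c \<in> insert Z2 (param_coords M) - insert Z2 (param_coords N)" for c
    using that by (intro pd_eq_0_if_depends_upto[OF assms(1)]) (auto simp: jet_coords_def)
  ultimately show ?thesis
    unfolding hatD2_eq_sum[OF assms(3)] by (intro sum.mono_neutral_right) auto
qed

definition zeta_args_expr :: "nat \<Rightarrow> (nat \<times> nat) option \<Rightarrow> jexpr" where
  "zeta_args_expr r y = (case y of None \<Rightarrow> Var Z1
     | Some (i, k) \<Rightarrow>
         (if k \<le> r then (if i = 1 then zeta1_expr k else if i = 2 then zeta2_expr k else Const 0)
          else Const 0))"

definition zeta_indices :: "nat \<Rightarrow> (nat \<times> nat) option set" where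
  "zeta_indices r = insert None (Some ` ({1, 2} \<times> {..r}))"

lemma finite_zeta_indices [simp]: "finite (zeta_indices r)"
  unfolding zeta_indices_def by simp

lemma zeta_args_outside_zeta_indices: "y \<notin> zeta_indices r \<Longrightarrow> zeta_args r q y = 0"
  unfolding zeta_indices_def zeta_args_def by (auto split: option.splits)

lemma zeta_args_eq_jeval: "q \<in> nondeg_jets \<Longrightarrow> zeta_args r q y = jeval (zeta_args_expr r y) q"
  unfolding zeta_args_def zeta_args_expr_def
  by (auto split: option.splits simp: zeta1_eq_jeval zeta2_eq_jeval)

lemma jvars_zeta_args_expr: "jvars (zeta_args_expr r y) \<subseteq> jet_coords (r + 2)"
  unfolding zeta_args_expr_def
  using jvars_zeta1_expr[of _ "r + 2"] jvars_zeta2_expr[of _ "r + 2"]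
  by (auto split: option.splits simp: jet_coords_def)

lemma jD2_zeta_args_expr: "q \<in> nondeg_jets \<Longrightarrow> jeval (jD2 (zeta_args_expr r y)) q = 0"
  unfolding zeta_args_expr_def by (auto split: option.splits simp: jD2_zeta1_expr jD2_zeta2_expr)

lemma hatD2_function_of_zeta_args:
  assumes "open V" "V \<subseteq> nondeg_jets" "depends_upto N \<alpha>" "open Om" "smooth_on Om F"
    and "\<forall>q\<in>V. zeta_args r q \<in> Om \<and> \<alpha> q = F (zeta_args r q)" "q \<in> V"
  shows "hatD2 N \<alpha> q = 0"
proof -
  define M where "M = max N (r + 2)"
  have q: "q \<in> nondeg_jets" using assms(2,7) by blast
  have pd_\<alpha>: "pd c \<alpha> q =
      (\<Sum>y\<in>zeta_indices r. pd y F (zeta_args r q) * jeval (jdiff c (zeta_args_expr r y)) q)" for c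
  proof -
    have "pd c \<alpha> q = pd c (\<lambda>q. F (zeta_args r q)) q"
      by (rule pd_cong_open[OF assms(1,7)]) (use assms(6) in auto)
    also have "\<dots> =
        (\<Sum>y\<in>zeta_indices r. pd y F (zeta_args r q) * jeval (jdiff c (zeta_args_expr r y)) q)"
      by (intro pd_eqI DERIV_comp_jexpr_map[OF assms(4) finite_zeta_indices
            smooth_on_imp_partially_C1_on[OF assms(5)] q])
        (use assms(6,7) in \<open>simp_all add: zeta_args_outside_zeta_indices zeta_args_eq_jeval\<close>)
    finally show ?thesis .
  qed
  have "hatD2 M \<alpha> q = (\<Sum>y\<in>zeta_indices r. pd y F (zeta_args r q) * jeval (jD2 (zeta_args_expr r y)) q)"
  proof (rule hatD2_chain_jexpr[OF q finite_zeta_indices])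
    show "jvars (zeta_args_expr r y) \<subseteq> jet_coords M" for y
      by (rule subset_trans[OF jvars_zeta_args_expr jet_coords_mono]) (simp add: M_def)
  qed (rule pd_\<alpha>)
  then show ?thesis
    using hatD2_mono[OF assms(3) _ q, of M] by (simp add: M_def jD2_zeta_args_expr[OF q])
qed

section \<open>Coordinates adapted to the \<open>\<zeta>\<close>'s\<close>

definition zeta_slot :: "nat \<Rightarrow> coord \<Rightarrow> bool" where
  "zeta_slot N c \<longleftrightarrow> (\<exists>j. (c = W j 1 \<and> 1 \<le> j \<and> j \<le> N) \<or> (c = W j 0 \<and> 2 \<le> j \<and> j \<le> N))"

lemma zeta_slotE:
  assumes "zeta_slot N c"
  obtains j where "c = W j 1" "1 \<le> j" "j \<le> N" | j where "c = W j 0" "2 \<le> j" "j \<le> N"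
  using assms unfolding zeta_slot_def by blast

lemma not_zeta_slot [simp]:
  "\<not> zeta_slot N Z1" "\<not> zeta_slot N Z2" "\<not> zeta_slot N (W k 2)" "\<not> zeta_slot N (W 0 0)"
  "\<not> zeta_slot N (W 0 1)" "\<not> zeta_slot N (W 1 0)"
  by (auto simp: zeta_slot_def)

lemma zeta_slot_jet_coords: "zeta_slot N c \<Longrightarrow> c \<in> jet_coords N"
  by (auto simp: zeta_slot_def mem_jet_coords)

fun to_zeta_expr :: "nat \<Rightarrow> coord \<Rightarrow> jexpr" where
  "to_zeta_expr N (W j l) =
     (if l = 1 \<and> 1 \<le> j \<and> j \<le> N then zeta1_expr (j - 1)
      else if l = 0 \<and> 2 \<le> j \<and> j \<le> N then zeta2_expr (j - 2) else Var (W j l))"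
| "to_zeta_expr N c = Var c"

fun from_zeta_expr :: "nat \<Rightarrow> coord \<Rightarrow> jexpr" where
  "from_zeta_expr N (W j l) =
     (if l = 1 \<and> 1 \<le> j \<and> j \<le> N then Add (Var (W j l)) (Mul (Const (-1)) (P_expr (j - 1)))
      else if l = 0 \<and> 2 \<le> j \<and> j \<le> N
        then Add (Var (W j l)) (Add (Q_expr (j - 2)) (Mul (Var Z2) (Var (W j 1))))
      else Var (W j l))"
| "from_zeta_expr N c = Var c"

definition to_zeta :: "nat \<Rightarrow> (coord \<Rightarrow> real) \<Rightarrow> coord \<Rightarrow> real" where
  "to_zeta N q = (\<lambda>c. jeval (to_zeta_expr N c) q)"

definition from_zeta :: "nat \<Rightarrow> (coord \<Rightarrow> real) \<Rightarrow> coord \<Rightarrow> real" where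
  "from_zeta N v = (\<lambda>c. jeval (from_zeta_expr N c) v)"

lemma to_zeta_expr_nonslot [simp]: "\<not> zeta_slot N c \<Longrightarrow> to_zeta_expr N c = Var c"
  by (cases c) (auto simp: zeta_slot_def)

lemma from_zeta_expr_nonslot [simp]: "\<not> zeta_slot N c \<Longrightarrow> from_zeta_expr N c = Var c"
  by (cases c) (auto simp: zeta_slot_def)

lemma to_zeta_nonslot [simp]: "\<not> zeta_slot N c \<Longrightarrow> to_zeta N q c = q c"
  by (simp add: to_zeta_def)

lemma from_zeta_nonslot [simp]: "\<not> zeta_slot N c \<Longrightarrow> from_zeta N v c = v c"
  by (simp add: from_zeta_def)

lemma to_zeta_W1: "1 \<le> j \<Longrightarrow> j \<le> N \<Longrightarrow> to_zeta N q (W j 1) = q (W j 1) + jeval (P_expr (j - 1)) q"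
  by (simp add: to_zeta_def zeta1_expr_def)

lemma to_zeta_W0:
  assumes "2 \<le> j" "j \<le> N"
  shows "to_zeta N q (W j 0) = q (W j 0) - jeval (Q_expr (j - 2)) q - q Z2 * (q (W j 1) + jeval (P_expr (j - 1)) q)"
proof -
  have "Suc (j - 2) = j - 1" "Suc (j - 1) = j" "Suc (Suc (j - 2)) = j" using assms(1) by auto
  then show ?thesis using assms by (simp add: to_zeta_def zeta2_expr_def zeta1_expr_def)
qed

lemma from_zeta_W1: "1 \<le> j \<Longrightarrow> j \<le> N \<Longrightarrow> from_zeta N v (W j 1) = v (W j 1) - jeval (P_expr (j - 1)) v"
  by (simp add: from_zeta_def)

lemma from_zeta_W0:
  "2 \<le> j \<Longrightarrow> j \<le> N \<Longrightarrow> from_zeta N v (W j 0) = v (W j 0) + jeval (Q_expr (j - 2)) v + v Z2 * v (W j 1)"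
  by (simp add: from_zeta_def)

lemma jeval_cong_w2_coords:
  assumes "jvars e \<subseteq> w2_coords m" "\<And>i. q (W i 2) = q' (W i 2)"
  shows "jeval e q = jeval e q'"
  by (rule jeval_cong) (use assms in \<open>auto simp: w2_coords_def\<close>)

lemma jeval_P_Q_w3_to_zeta [simp]:
  "jeval (P_expr k) (to_zeta N q) = jeval (P_expr k) q"
  "jeval (Q_expr k) (to_zeta N q) = jeval (Q_expr k) q"
  "jeval (w3_expr k) (to_zeta N q) = jeval (w3_expr k) q"
  by (rule jeval_cong_w2_coords[OF jvars_P_expr], simp,
      rule jeval_cong_w2_coords[OF jvars_Q_expr], simp,
      rule jeval_cong_w2_coords[OF jvars_w3_expr], simp)

lemma jeval_P_Q_w3_from_zeta [simp]:
  "jeval (P_expr k) (from_zeta N v) = jeval (P_expr k) v"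
  "jeval (Q_expr k) (from_zeta N v) = jeval (Q_expr k) v"
  "jeval (w3_expr k) (from_zeta N v) = jeval (w3_expr k) v"
  by (rule jeval_cong_w2_coords[OF jvars_P_expr], simp,
      rule jeval_cong_w2_coords[OF jvars_Q_expr], simp,
      rule jeval_cong_w2_coords[OF jvars_w3_expr], simp)

lemma from_zeta_to_zeta [simp]: "from_zeta N (to_zeta N q) = q"
proof
  fix c
  show "from_zeta N (to_zeta N q) c = q c"
  proof (cases "zeta_slot N c")
    case True
    then show ?thesis
    proof (cases rule: zeta_slotE)
      case (1 j)
      then show ?thesis using from_zeta_W1[of j N "to_zeta N q"] to_zeta_W1[of j N q] by simp
    next
      case (2 j)
      then show ?thesis
        using from_zeta_W0[of j N "to_zeta N q"] to_zeta_W0[of j N q] to_zeta_W1[of j N q] by simp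
    qed
  qed simp
qed

lemma to_zeta_from_zeta [simp]: "to_zeta N (from_zeta N v) = v"
proof
  fix c
  show "to_zeta N (from_zeta N v) c = v c"
  proof (cases "zeta_slot N c")
    case True
    then show ?thesis
    proof (cases rule: zeta_slotE)
      case (1 j)
      then show ?thesis using to_zeta_W1[of j N "from_zeta N v"] from_zeta_W1[of j N v] by simp
    next
      case (2 j)
      then show ?thesis
        using to_zeta_W0[of j N "from_zeta N v"] from_zeta_W0[of j N v] from_zeta_W1[of j N v] by simp
    qed
  qed simp
qed

lemma to_zeta_nondeg_jets_iff [simp]: "to_zeta N q \<in> nondeg_jets \<longleftrightarrow> q \<in> nondeg_jets"
  by (simp add: nondeg_jets_def)

lemma from_zeta_nondeg_jets_iff [simp]: "from_zeta N v \<in> nondeg_jets \<longleftrightarrow> v \<in> nondeg_jets"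
  by (simp add: nondeg_jets_def)

lemma continuous_on_to_zeta: "continuous_on nondeg_jets (to_zeta N)"
  unfolding to_zeta_def by (intro continuous_on_coordinatewise_then_product continuous_on_jeval)

lemma continuous_on_from_zeta: "continuous_on nondeg_jets (from_zeta N)"
  unfolding from_zeta_def by (intro continuous_on_coordinatewise_then_product continuous_on_jeval)

lemma jvars_to_zeta_expr: "c \<in> jet_coords N \<Longrightarrow> jvars (to_zeta_expr N c) \<subseteq> jet_coords N"
proof (cases "zeta_slot N c")
  case True
  then show ?thesis
  proof (cases rule: zeta_slotE)
    case (1 j)
    then show ?thesis using jvars_zeta1_expr[of "j - 1" N] by simp
  next
    case (2 j)
    then show ?thesis using jvars_zeta2_expr[of "j - 2" N] by simp
  qed
qed simp

lemma jvars_from_zeta_expr: "c \<in> jet_coords N \<Longrightarrow> jvars (from_zeta_expr N c) \<subseteq> jet_coords N"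
proof (cases "zeta_slot N c")
  case True
  then show ?thesis
  proof (cases rule: zeta_slotE)
    case (1 j)
    moreover have "W j 1 \<in> jet_coords N"
      using 1 by (auto simp: mem_jet_coords)
    ultimately show ?thesis using jvars_P_expr_jet_coords[of "j - 1" N] by simp
  next
    case (2 j)
    moreover have "W j 0 \<in> jet_coords N" "W j 1 \<in> jet_coords N" "Z2 \<in> jet_coords N"
      using 2 by (auto simp: mem_jet_coords)
    ultimately show ?thesis using jvars_Q_expr_jet_coords[of "j - 2" N] by simp
  qed
qed simp

lemma jD2_to_zeta_expr:
  assumes "u \<in> nondeg_jets"
  shows "jeval (jD2 (to_zeta_expr N c)) u = (if zeta_slot N c then 0 else jeval (D2_var c) u)"
proof (cases "zeta_slot N c")
  case True
  then show ?thesis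
    using assms by (cases rule: zeta_slotE) (auto simp: jD2_zeta1_expr jD2_zeta2_expr zeta_slot_def)
qed simp

text \<open>The jet whose \<open>z\<^sub>1\<close> and \<open>\<zeta>\<close>-coordinates are given by \<open>y\<close> and whose other adapted coordinates
  are those of \<open>p\<close>; it depends affinely on \<open>y\<close>.\<close>

definition zeta_section :: "nat \<Rightarrow> (coord \<Rightarrow> real) \<Rightarrow> ((nat \<times> nat) option \<Rightarrow> real) \<Rightarrow> coord \<Rightarrow> real" where
  "zeta_section N p y c = (case c of Z1 \<Rightarrow> y None | Z2 \<Rightarrow> p Z2
     | W j l \<Rightarrow>
         (if l = 1 \<and> 1 \<le> j \<and> j \<le> N then y (Some (1, j - 1)) - jeval (P_expr (j - 1)) p
          else if l = 0 \<and> 2 \<le> j \<and> j \<le> N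
            then y (Some (2, j - 2)) + jeval (Q_expr (j - 2)) p + p Z2 * y (Some (1, j - 1))
          else p (W j l)))"

definition zeta_section_slope :: "nat \<Rightarrow> (coord \<Rightarrow> real) \<Rightarrow> coord \<Rightarrow> (nat \<times> nat) option \<Rightarrow> real" where
  "zeta_section_slope N p c d = (case c of Z1 \<Rightarrow> (if d = None then 1 else 0) | Z2 \<Rightarrow> 0
     | W j l \<Rightarrow>
         (if l = 1 \<and> 1 \<le> j \<and> j \<le> N then (if d = Some (1, j - 1) then 1 else 0)
          else if l = 0 \<and> 2 \<le> j \<and> j \<le> N
            then (if d = Some (2, j - 2) then 1 else 0) + (if d = Some (1, j - 1) then p Z2 else 0)
          else 0))"

lemma zeta_section_fun_upd:
  "zeta_section N p (y(d := t)) = (\<lambda>c. zeta_section N p y c + (t - y d) * zeta_section_slope N p c d)"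
proof
  fix c
  show "zeta_section N p (y(d := t)) c = zeta_section N p y c + (t - y d) * zeta_section_slope N p c d"
    by (cases c) (auto simp: zeta_section_def zeta_section_slope_def algebra_simps)
qed

lemma zeta_section_slope_outside: "c \<notin> jet_coords N \<Longrightarrow> zeta_section_slope N p c d = 0"
  by (cases c) (auto simp: zeta_section_slope_def mem_jet_coords)

lemma continuous_on_zeta_section: "continuous_on UNIV (zeta_section N p)"
proof (rule continuous_on_coordinatewise_then_product)
  fix c
  show "continuous_on UNIV (\<lambda>y. zeta_section N p y c)"
  proof (cases c)
    case (W j l)
    then show ?thesis
      unfolding zeta_section_def
      by (cases "l = 1 \<and> 1 \<le> j \<and> j \<le> N"; cases "l = 0 \<and> 2 \<le> j \<and> j \<le> N")
        (auto intro!: continuous_intros)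
  qed (simp_all add: zeta_section_def)
qed

lemma zeta_section_simps [simp]:
  "zeta_section N p y Z1 = y None" "zeta_section N p y Z2 = p Z2" "zeta_section N p y (W k 2) = p (W k 2)"
  by (simp_all add: zeta_section_def)

lemma zeta_section_W1:
  "1 \<le> j \<Longrightarrow> j \<le> N \<Longrightarrow> zeta_section N p y (W j 1) = y (Some (1, j - 1)) - jeval (P_expr (j - 1)) p"
  by (simp add: zeta_section_def)

lemma zeta_section_W0:
  "2 \<le> j \<Longrightarrow> j \<le> N \<Longrightarrow>
    zeta_section N p y (W j 0) = y (Some (2, j - 2)) + jeval (Q_expr (j - 2)) p + p Z2 * y (Some (1, j - 1))"
  by (simp add: zeta_section_def)

lemma jeval_P_Q_zeta_section [simp]:
  "jeval (P_expr k) (zeta_section N p y) = jeval (P_expr k) p"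
  "jeval (Q_expr k) (zeta_section N p y) = jeval (Q_expr k) p"
  by (rule jeval_cong_w2_coords[OF jvars_P_expr], simp, rule jeval_cong_w2_coords[OF jvars_Q_expr], simp)

lemma to_zeta_zeta_section:
  assumes "q \<in> nondeg_jets" "N \<le> r"
  shows "to_zeta N (zeta_section N p (zeta_args r q)) =
    (\<lambda>c. if c = Z1 \<or> zeta_slot N c then to_zeta N q c else to_zeta N p c)"
proof
  fix c
  let ?s = "zeta_section N p (zeta_args r q)"
  show "to_zeta N ?s c = (if c = Z1 \<or> zeta_slot N c then to_zeta N q c else to_zeta N p c)"
  proof (cases "zeta_slot N c")
    case True
    then show ?thesis
    proof (cases rule: zeta_slotE)
      case (1 j)
      then have "to_zeta N ?s c = zeta1 (j - 1) q"
        using to_zeta_W1[of j N ?s] zeta_section_W1[of j N p] assms(2) by (simp add: zeta_args_def)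
      then show ?thesis
        using 1 True assms(1) by (simp add: to_zeta_def zeta1_eq_jeval)
    next
      case (2 j)
      moreover have "j - 1 \<le> r" "j - 2 \<le> r" using 2 assms(2) by auto
      ultimately have "to_zeta N ?s c = zeta2 (j - 2) q"
        using to_zeta_W0[of j N ?s] zeta_section_W0[of j N p] zeta_section_W1[of j N p] assms(2)
        by (simp add: zeta_args_def)
      then show ?thesis
        using 2 True assms(1) by (simp add: to_zeta_def zeta2_eq_jeval)
    qed
  next
    case False
    then show ?thesis
      by (cases c) (auto simp: zeta_section_def zeta_args_def zeta_slot_def)
  qed
qed

section \<open>\<open>z\<^sub>2\<close>-integrals are locally functions of the \<open>\<zeta>\<close>'s\<close>

locale jet_function =
  fixes N :: nat and U :: "(coord \<Rightarrow> real) set" and \<alpha> :: "(coord \<Rightarrow> real) \<Rightarrow> real"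
  assumes open_U: "open U" and U_nondeg: "U \<subseteq> nondeg_jets"
    and depends_\<alpha>: "depends_upto N \<alpha>" and smooth_\<alpha>: "smooth_on U \<alpha>"
begin

definition alpha_zeta :: "(coord \<Rightarrow> real) \<Rightarrow> real" where
  "alpha_zeta v = \<alpha> (from_zeta N v)"

definition zeta_domain :: "(coord \<Rightarrow> real) set" where
  "zeta_domain = {v \<in> nondeg_jets. from_zeta N v \<in> U}"

lemma open_zeta_domain: "open zeta_domain"
proof -
  have "open (from_zeta N -` U \<inter> nondeg_jets)"
    using continuous_on_open_vimage[OF open_nondeg_jets] continuous_on_from_zeta open_U by blast
  moreover have "zeta_domain = from_zeta N -` U \<inter> nondeg_jets"
    unfolding zeta_domain_def by auto
  ultimately show ?thesis by simp
qed

lemma zeta_domain_nondeg: "v \<in> zeta_domain \<Longrightarrow> v \<in> nondeg_jets"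
  by (simp add: zeta_domain_def)

lemma to_zeta_in_zeta_domain: "u \<in> U \<Longrightarrow> to_zeta N u \<in> zeta_domain"
  using U_nondeg by (auto simp: zeta_domain_def)

lemma alpha_eq_alpha_zeta: "\<alpha> q = alpha_zeta (to_zeta N q)"
  by (simp add: alpha_zeta_def)

lemma DERIV_alpha_zeta:
  assumes "v \<in> zeta_domain"
  shows "((\<lambda>t. alpha_zeta (v(c := t))) has_real_derivative
     (\<Sum>x\<in>insert c (jet_coords N). pd x \<alpha> (from_zeta N v) * jeval (jdiff c (from_zeta_expr N x)) v)) (at (v c))"
  unfolding alpha_zeta_def
proof (rule DERIV_comp_jexpr_map[OF open_U])
  show "partially_C1_on (insert c (jet_coords N)) U \<alpha>"
    by (rule smooth_on_imp_partially_C1_on[OF smooth_\<alpha>])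
  show "from_zeta N (v(c := t)) y = from_zeta N v y" if "y \<notin> insert c (jet_coords N)" for y t
  proof -
    have "\<not> zeta_slot N y" using that zeta_slot_jet_coords by blast
    with that show ?thesis by simp
  qed
  show "from_zeta N q y = jeval (from_zeta_expr N y) q" for y q
    by (simp add: from_zeta_def)
qed (use assms in \<open>simp_all add: zeta_domain_def\<close>)

lemma partially_C1_alpha_zeta: "partially_C1_on S zeta_domain alpha_zeta"
  unfolding partially_C1_on_def
proof (intro ballI conjI)
  fix c
  have "continuous_on U (pd x \<alpha>)" for x
    using smooth_on_imp_partially_C1_on[OF smooth_\<alpha>, of "{x}"] by (simp add: partially_C1_on_def)
  moreover have "continuous_on zeta_domain (from_zeta N)"
    by (rule continuous_on_subset[OF continuous_on_from_zeta]) (auto simp: zeta_domain_def)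
  ultimately have "continuous_on zeta_domain (\<lambda>v. pd x \<alpha> (from_zeta N v))" for x
    by (rule continuous_on_compose2) (auto simp: zeta_domain_def)
  moreover have "continuous_on zeta_domain (jeval e)" for e
    by (rule continuous_on_subset[OF continuous_on_jeval]) (auto simp: zeta_domain_def)
  ultimately have "continuous_on zeta_domain (\<lambda>v. \<Sum>x\<in>insert c (jet_coords N).
      pd x \<alpha> (from_zeta N v) * jeval (jdiff c (from_zeta_expr N x)) v)"
    by (intro continuous_on_sum continuous_on_mult)
  then show "continuous_on zeta_domain (pd c alpha_zeta)"
    by (rule continuous_on_eq) (simp add: pd_eqI[OF DERIV_alpha_zeta])
  show "(\<lambda>t. alpha_zeta (p(c := t))) differentiable (at (p c))" if "p \<in> zeta_domain" for p
    using DERIV_alpha_zeta[OF that] by (auto simp: real_differentiable_def)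
qed

lemma pd_alpha_via_alpha_zeta:
  assumes "u \<in> U"
  shows "pd x \<alpha> u =
    (\<Sum>c\<in>insert x (jet_coords N). pd c alpha_zeta (to_zeta N u) * jeval (jdiff x (to_zeta_expr N c)) u)"
proof -
  have "pd x \<alpha> u = pd x (\<lambda>q. alpha_zeta (to_zeta N q)) u"
    by (rule pd_cong_open[OF open_U assms]) (simp add: alpha_eq_alpha_zeta)
  also have "\<dots> = (\<Sum>c\<in>insert x (jet_coords N).
      pd c alpha_zeta (to_zeta N u) * jeval (jdiff x (to_zeta_expr N c)) u)"
  proof (intro pd_eqI DERIV_comp_jexpr_map[OF open_zeta_domain])
    show "to_zeta N (u(x := t)) y = to_zeta N u y" if "y \<notin> insert x (jet_coords N)" for y t
    proof -
      have "\<not> zeta_slot N y" using that zeta_slot_jet_coords by blast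
      with that show ?thesis by simp
    qed
    show "to_zeta N q y = jeval (to_zeta_expr N y) q" for y q
      by (simp add: to_zeta_def)
  qed (use assms U_nondeg in \<open>auto simp: partially_C1_alpha_zeta to_zeta_in_zeta_domain\<close>)
  finally show ?thesis .
qed

lemma hatD2_via_alpha_zeta:
  assumes "u \<in> U"
  shows "hatD2 N \<alpha> u =
    (\<Sum>c\<in>jet_coords N. pd c alpha_zeta (to_zeta N u) * (if zeta_slot N c then 0 else jeval (D2_var c) u))"
proof -
  have u: "u \<in> nondeg_jets" using assms U_nondeg by blast
  have "hatD2 N \<alpha> u = (\<Sum>c\<in>jet_coords N. pd c alpha_zeta (to_zeta N u) * jeval (jD2 (to_zeta_expr N c)) u)"
  proof (rule hatD2_chain_jexpr[OF u finite_jet_coords jvars_to_zeta_expr])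
    fix x assume "x \<in> insert Z2 (param_coords N)"
    then have "insert x (jet_coords N) = jet_coords N" by (auto simp: jet_coords_def)
    then show "pd x \<alpha> u = (\<Sum>c\<in>jet_coords N. pd c alpha_zeta (to_zeta N u) * jeval (jdiff x (to_zeta_expr N c)) u)"
      using pd_alpha_via_alpha_zeta[OF assms, of x] by simp
  qed
  then show ?thesis by (simp add: jD2_to_zeta_expr[OF u])
qed

text \<open>\<open>hatD2\<close> in the adapted coordinates: the \<open>\<zeta>\<close>-directions drop out, and the coefficient
  \<open>w\<^sub>1\<^sub>,\<^sub>1\<close> of the \<open>w\<^sub>1\<^sub>,\<^sub>0\<close>-derivative is rewritten through \<open>\<zeta>\<^sup>1\<^sup>0 = w\<^sub>1\<^sub>,\<^sub>1 + w\<^sub>0\<^sub>,\<^sub>2\<^sup>2 / 2\<close>.\<close>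

definition D2_zeta :: "(coord \<Rightarrow> real) \<Rightarrow> real" where
  "D2_zeta v = pd Z2 alpha_zeta v + v (W 0 1) * pd (W 0 0) alpha_zeta v
     + (if 1 \<le> N then (v (W 1 1) - v (W 0 2) * v (W 0 2) / 2) * pd (W 1 0) alpha_zeta v else 0)
     + v (W 0 2) * pd (W 0 1) alpha_zeta v + (\<Sum>k\<le>N. jeval (w3_expr k) v * pd (W k 2) alpha_zeta v)"

lemma sum_eq_D2_zeta:
  "(\<Sum>c\<in>jet_coords N. pd c alpha_zeta v * (if zeta_slot N c then 0 else jeval (D2_var c) (from_zeta N v)))
     = D2_zeta v"
proof -
  define T where "T c = pd c alpha_zeta v * (if zeta_slot N c then 0 else jeval (D2_var c) (from_zeta N v))"
    for c
  have "T (W k 0) + T (W k 1) + T (W k 2) =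
     (if k = 0 then v (W 0 1) * pd (W 0 0) alpha_zeta v + v (W 0 2) * pd (W 0 1) alpha_zeta v else 0)
     + (if k = 1 then (v (W 1 1) - v (W 0 2) * v (W 0 2) / 2) * pd (W 1 0) alpha_zeta v else 0)
     + jeval (w3_expr k) v * pd (W k 2) alpha_zeta v" if "k \<le> N" for k
  proof -
    have T2: "T (W k 2) = jeval (w3_expr k) v * pd (W k 2) alpha_zeta v"
      by (simp add: T_def)
    consider "k = 0" | "k = 1" | "2 \<le> k" by linarith
    then show ?thesis
    proof cases
      case 1
      moreover note T2
      moreover have "\<not> zeta_slot N (W 0 1)" "\<not> zeta_slot N (W 0 0)" by (simp_all add: zeta_slot_def)
      ultimately show ?thesis by (simp add: T_def)
    next
      case 2
      moreover note T2
      moreover have "zeta_slot N (W 1 1)" "\<not> zeta_slot N (W 1 0)"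
        using that 2 by (auto simp: zeta_slot_def)
      moreover have "from_zeta N v (W 1 1) = v (W 1 1) - v (W 0 2) * v (W 0 2) / 2"
        using from_zeta_W1[of 1 N v] that 2 by simp
      ultimately show ?thesis by (simp add: T_def)
    next
      case 3
      moreover note T2
      moreover have "zeta_slot N (W k 1)" "zeta_slot N (W k 0)" using that 3 by (auto simp: zeta_slot_def)
      ultimately show ?thesis by (simp add: T_def)
    qed
  qed
  then have "(\<Sum>k\<le>N. T (W k 0) + T (W k 1) + T (W k 2)) =
     (v (W 0 1) * pd (W 0 0) alpha_zeta v + v (W 0 2) * pd (W 0 1) alpha_zeta v)
     + (if 1 \<le> N then (v (W 1 1) - v (W 0 2) * v (W 0 2) / 2) * pd (W 1 0) alpha_zeta v else 0)
     + (\<Sum>k\<le>N. jeval (w3_expr k) v * pd (W k 2) alpha_zeta v)"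
    by (simp add: sum.distrib)
  then show ?thesis
    unfolding T_def[symmetric] sum_jet_coords by (simp add: T_def D2_zeta_def)
qed

lemma hatD2_eq_D2_zeta:
  assumes "u \<in> U"
  shows "hatD2 N \<alpha> u = D2_zeta (to_zeta N u)"
  using hatD2_via_alpha_zeta[OF assms] sum_eq_D2_zeta[of "to_zeta N u"]
  unfolding from_zeta_to_zeta by simp

lemma depends_upto_alpha_zeta: "depends_upto N alpha_zeta"
  unfolding depends_upto_def
proof (intro allI impI)
  fix p q :: "coord \<Rightarrow> real"
  assume "p Z1 = q Z1 \<and> p Z2 = q Z2 \<and> (\<forall>k l. k \<le> N \<and> l \<le> 2 \<longrightarrow> p (W k l) = q (W k l))"
  then have agree: "\<And>c. c \<in> jet_coords N \<Longrightarrow> p c = q c"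
    by (auto simp: mem_jet_coords)
  have "from_zeta N p c = from_zeta N q c" if "c \<in> jet_coords N" for c
    unfolding from_zeta_def by (rule jeval_cong) (use jvars_from_zeta_expr[OF that] agree in blast)
  then have "from_zeta N p Z1 = from_zeta N q Z1 \<and> from_zeta N p Z2 = from_zeta N q Z2 \<and>
      (\<forall>k l. k \<le> N \<and> l \<le> 2 \<longrightarrow> from_zeta N p (W k l) = from_zeta N q (W k l))"
    by (simp add: mem_jet_coords del: from_zeta_nonslot)
  then show "alpha_zeta p = alpha_zeta q"
    using depends_\<alpha> unfolding depends_upto_def alpha_zeta_def by blast
qed

end

locale D2_integral_on_cylinder = jet_function +
  fixes C :: "coord set" and e :: real and v0 :: "coord \<Rightarrow> real"
  assumes finite_C: "finite C" and cylinder_subset: "cylinder C e v0 \<subseteq> zeta_domain"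
    and hatD2_eq_0: "\<forall>p\<in>U. hatD2 N \<alpha> p = 0"
begin

abbreviation B :: "(coord \<Rightarrow> real) set" where
  "B \<equiv> cylinder C e v0"

lemma cylinder_nondeg: "v \<in> B \<Longrightarrow> v \<in> nondeg_jets"
  using cylinder_subset zeta_domain_nondeg by blast

lemma D2_zeta_eq_0: "v \<in> B \<Longrightarrow> D2_zeta v = 0"
proof -
  assume "v \<in> B"
  then have "from_zeta N v \<in> U" using cylinder_subset by (auto simp: zeta_domain_def)
  then show ?thesis using hatD2_eq_D2_zeta hatD2_eq_0 by fastforce
qed

lemma alpha_zeta_differentiable: "w \<in> B \<Longrightarrow> (\<lambda>t. alpha_zeta (w(c := t))) differentiable (at (w c))"
  using partially_C1_alpha_zeta[of "{c}"] cylinder_subset by (auto simp: partially_C1_on_def)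

lemma alpha_zeta_fun_upd_eq:
  "\<forall>w\<in>B. pd c alpha_zeta w = 0 \<Longrightarrow> v \<in> B \<Longrightarrow> v(c := t) \<in> B \<Longrightarrow> alpha_zeta (v(c := t)) = alpha_zeta v"
  by (rule fun_upd_eq_if_pd_eq_0_on_cylinder[OF alpha_zeta_differentiable]) auto

lemma pd_alpha_zeta_fun_upd_eq:
  "\<forall>w\<in>B. pd d alpha_zeta w = 0 \<Longrightarrow> v \<in> B \<Longrightarrow> v(d := t) \<in> B \<Longrightarrow> c \<noteq> d \<Longrightarrow>
     pd c alpha_zeta (v(d := t)) = pd c alpha_zeta v"
  by (rule pd_fun_upd_eq_if_pd_eq_0_on_cylinder[OF finite_C alpha_zeta_differentiable]) auto

lemma D2_zeta_fun_upd_W2: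
  assumes "j \<le> N" and above: "\<And>k. j < k \<Longrightarrow> \<forall>w\<in>B. pd (W k 2) alpha_zeta w = 0"
    and v: "v \<in> B" "v(W (Suc j) 2 := t) \<in> B"
  shows "D2_zeta (v(W (Suc j) 2 := t)) = D2_zeta v +
    (jeval (w3_expr j) (v(W (Suc j) 2 := t)) - jeval (w3_expr j) v) * pd (W j 2) alpha_zeta v"
proof -
  define d where "d = W (Suc j) 2"
  have pd_eq: "pd c alpha_zeta (v(d := t)) = pd c alpha_zeta v" if "c \<noteq> d" for c
    using pd_alpha_zeta_fun_upd_eq[OF above[of "Suc j"] v that[unfolded d_def]] by (simp add: d_def)
  have "jeval (w3_expr k) (v(d := t)) * pd (W k 2) alpha_zeta (v(d := t)) =
      jeval (w3_expr k) v * pd (W k 2) alpha_zeta v +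
      (if k = j then (jeval (w3_expr j) (v(d := t)) - jeval (w3_expr j) v) * pd (W j 2) alpha_zeta v else 0)"
    for k
  proof (cases k j rule: linorder_cases)
    case less
    then have "d \<notin> jvars (w3_expr k)"
      using jvars_w3_expr[of k] by (auto simp: d_def w2_coords_def)
    then have "jeval (w3_expr k) (v(d := t)) = jeval (w3_expr k) v"
      by (intro jeval_cong) auto
    moreover have "pd (W k 2) alpha_zeta (v(d := t)) = pd (W k 2) alpha_zeta v"
      using less by (intro pd_eq) (simp add: d_def)
    ultimately show ?thesis using less by simp
  next
    case equal
    moreover have "pd (W j 2) alpha_zeta (v(d := t)) = pd (W j 2) alpha_zeta v"
      by (rule pd_eq) (simp add: d_def)
    ultimately show ?thesis by (simp add: algebra_simps)
  next
    case greater
    then show ?thesis using above[OF greater] v by (simp add: d_def)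
  qed
  then have "(\<Sum>k\<le>N. jeval (w3_expr k) (v(d := t)) * pd (W k 2) alpha_zeta (v(d := t))) =
      (\<Sum>k\<le>N. jeval (w3_expr k) v * pd (W k 2) alpha_zeta v) +
      (jeval (w3_expr j) (v(d := t)) - jeval (w3_expr j) v) * pd (W j 2) alpha_zeta v"
    using assms(1) by (simp add: sum.distrib)
  moreover have "pd c alpha_zeta (v(d := t)) = pd c alpha_zeta v" if "c \<in> {Z2, W 0 0, W 1 0, W 0 1}" for c
    using that by (intro pd_eq) (auto simp: d_def)
  moreover have "(v(d := t)) c = v c" if "c \<in> {W 0 1, W 0 2, W 1 1}" for c
    using that by (auto simp: d_def)
  ultimately show ?thesis
    unfolding D2_zeta_def d_def[symmetric] by simp
qed

text \<open>\<open>w\<^sub>j\<^sub>+\<^sub>1\<^sub>,\<^sub>2\<close> enters \<open>D2_zeta\<close> only through \<open>w\<^sub>j\<^sub>,\<^sub>3 = - w\<^sub>j\<^sub>+\<^sub>1\<^sub>,\<^sub>2 / w\<^sub>0\<^sub>,\<^sub>2 + \<dots>\<close>.\<close>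

lemma pd_W2_eq_0_if_above:
  assumes "j \<le> N" "\<And>k. j < k \<Longrightarrow> \<forall>w\<in>B. pd (W k 2) alpha_zeta w = 0" "v \<in> B"
  shows "pd (W j 2) alpha_zeta v = 0"
proof -
  define d where "d = W (Suc j) 2"
  define g where "g = pd (W j 2) alpha_zeta v"
  have "\<forall>\<^sub>F t in nhds (v d). (jeval (w3_expr j) (v(d := t)) - jeval (w3_expr j) v) * g = 0"
    using eventually_nhds_fun_upd[OF open_cylinder[OF finite_C] assms(3), of d]
  proof (elim eventually_mono)
    fix t assume "v(d := t) \<in> B"
    then show "(jeval (w3_expr j) (v(d := t)) - jeval (w3_expr j) v) * g = 0"
      using D2_zeta_fun_upd_W2[OF assms] D2_zeta_eq_0 assms(3) by (simp add: d_def g_def)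
  qed
  moreover have "((\<lambda>t. (jeval (w3_expr j) (v(d := t)) - jeval (w3_expr j) v) * g) has_real_derivative
      jeval (jdiff d (w3_expr j)) v * g) (at (v d))"
    using DERIV_jeval[OF cylinder_nondeg[OF assms(3)], where c = d and e = "w3_expr j"]
    by (intro DERIV_cmult_right) (simp add: DERIV_diff[OF _ DERIV_const, where 'a = real, simplified])
  ultimately have "jeval (jdiff d (w3_expr j)) v * g = 0"
    by (rule DERIV_eq_0_if_eventually_0)
  moreover have "jeval (jdiff d (w3_expr j)) v \<noteq> 0"
    using cylinder_nondeg[OF assms(3)] by (simp add: d_def jeval_jdiff_top_w3_expr nondeg_jets_def)
  ultimately show ?thesis by (simp add: g_def)
qed

lemma pd_W2_eq_0:
  assumes "v \<in> B"
  shows "pd (W j 2) alpha_zeta v = 0"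
proof -
  have "\<forall>k\<ge>n. \<forall>w\<in>B. pd (W k 2) alpha_zeta w = 0" if "n \<le> Suc N" for n
    using that
  proof (induction n rule: inc_induct)
    case base
    show ?case
      by (auto intro: pd_eq_0_if_depends_upto[OF depends_upto_alpha_zeta] simp: mem_jet_coords)
  next
    case (step n)
    show ?case
    proof (intro allI impI ballI)
      fix k w assume "n \<le> k" "w \<in> B"
      show "pd (W k 2) alpha_zeta w = 0"
      proof (cases "k = n")
        case True
        with step \<open>w \<in> B\<close> show ?thesis by (intro pd_W2_eq_0_if_above) auto
      qed (use step \<open>n \<le> k\<close> \<open>w \<in> B\<close> in auto)
    qed
  qed
  with assms show ?thesis by blast
qed

lemma D2_zeta_without_W2:
  "w \<in> B \<Longrightarrow> D2_zeta w = pd Z2 alpha_zeta w + w (W 0 1) * pd (W 0 0) alpha_zeta w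
     + (if 1 \<le> N then (w (W 1 1) - w (W 0 2) * w (W 0 2) / 2) * pd (W 1 0) alpha_zeta w else 0)
     + w (W 0 2) * pd (W 0 1) alpha_zeta w"
  by (simp add: D2_zeta_def pd_W2_eq_0)

text \<open>With the \<open>w\<^sub>k\<^sub>,\<^sub>2\<close>-derivatives gone, \<open>D2_zeta\<close> is a quadratic polynomial in \<open>w\<^sub>0\<^sub>,\<^sub>2\<close>
  and then an affine function of \<open>w\<^sub>0\<^sub>,\<^sub>1\<close> whose coefficients do not depend on these coordinates.\<close>

lemma pd_W01_W10_eq_0:
  assumes "v \<in> B"
  shows "pd (W 0 1) alpha_zeta v = 0 \<and> pd (W 1 0) alpha_zeta v = 0"
proof -
  define d where "d = W 0 2"
  define a where "a = pd Z2 alpha_zeta v + v (W 0 1) * pd (W 0 0) alpha_zeta v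
    + (if 1 \<le> N then v (W 1 1) * pd (W 1 0) alpha_zeta v else 0)"
  define b where "b = pd (W 0 1) alpha_zeta v"
  define c where "c = (if 1 \<le> N then - pd (W 1 0) alpha_zeta v / 2 else 0)"
  have "\<forall>\<^sub>F t in nhds (v d). a + b * t + c * t\<^sup>2 = 0"
    using eventually_nhds_fun_upd[OF open_cylinder[OF finite_C] assms, of d]
  proof (elim eventually_mono)
    fix t assume t: "v(d := t) \<in> B"
    have "pd x alpha_zeta (v(d := t)) = pd x alpha_zeta v" if "x \<in> {Z2, W 0 0, W 1 0, W 0 1}" for x
      using that pd_W2_eq_0 by (intro pd_alpha_zeta_fun_upd_eq[OF _ assms t]) (auto simp: d_def)
    then have "D2_zeta (v(d := t)) = a + b * t + c * t\<^sup>2"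
      unfolding D2_zeta_without_W2[OF t] a_def b_def c_def
      by (simp add: d_def power2_eq_square algebra_simps)
    then show "a + b * t + c * t\<^sup>2 = 0" using D2_zeta_eq_0[OF t] by simp
  qed
  then have "b = 0" "c = 0" using quadratic_eventually_zero by blast+
  moreover have "pd (W 1 0) alpha_zeta v = 0" if "\<not> 1 \<le> N"
    using that by (intro pd_eq_0_if_depends_upto[OF depends_upto_alpha_zeta]) (simp add: mem_jet_coords)
  ultimately show ?thesis by (auto simp: b_def c_def split: if_splits)
qed

lemma pd_W00_Z2_eq_0:
  assumes "v \<in> B"
  shows "pd (W 0 0) alpha_zeta v = 0 \<and> pd Z2 alpha_zeta v = 0"
proof -
  define d where "d = W 0 1"
  have D2_zeta_affine: "D2_zeta w = pd Z2 alpha_zeta w + w (W 0 1) * pd (W 0 0) alpha_zeta w" if "w \<in> B" for w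
    using D2_zeta_without_W2[OF that] pd_W01_W10_eq_0[OF that] by simp
  have "\<forall>\<^sub>F t in nhds (v d). pd Z2 alpha_zeta v + pd (W 0 0) alpha_zeta v * t + 0 * t\<^sup>2 = 0"
    using eventually_nhds_fun_upd[OF open_cylinder[OF finite_C] assms, of d]
  proof (elim eventually_mono)
    fix t assume t: "v(d := t) \<in> B"
    have "pd x alpha_zeta (v(d := t)) = pd x alpha_zeta v" if "x \<in> {Z2, W 0 0}" for x
      using that pd_W01_W10_eq_0 by (intro pd_alpha_zeta_fun_upd_eq[OF _ assms t]) (auto simp: d_def)
    then show "pd Z2 alpha_zeta v + pd (W 0 0) alpha_zeta v * t + 0 * t\<^sup>2 = 0"
      using D2_zeta_affine[OF t] D2_zeta_eq_0[OF t] by (simp add: d_def algebra_simps)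
  qed
  then have "pd (W 0 0) alpha_zeta v = 0" using quadratic_eventually_zero by blast
  moreover have "pd Z2 alpha_zeta v = 0"
    using D2_zeta_affine[OF assms] D2_zeta_eq_0[OF assms] calculation by simp
  ultimately show ?thesis ..
qed

lemma pd_alpha_zeta_eq_0_if_free:
  assumes "c \<noteq> Z1" "\<not> zeta_slot N c" "v \<in> B"
  shows "pd c alpha_zeta v = 0"
proof (cases "c \<in> jet_coords N")
  case False
  then show ?thesis by (rule pd_eq_0_if_depends_upto[OF depends_upto_alpha_zeta])
next
  case True
  then consider "c = Z2" | k l where "c = W k l" "k \<le> N" "l \<le> 2"
    using assms(1) by (auto simp: mem_jet_coords)
  then show ?thesis
  proof cases
    case (2 k l)
    then have "\<not> ((l = 1 \<and> 1 \<le> k) \<or> (l = 0 \<and> 2 \<le> k))"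
      using assms(2) by (auto simp: zeta_slot_def)
    then have "l = 2 \<or> (k = 0 \<and> l = 1) \<or> (k = 0 \<and> l = 0) \<or> (k = 1 \<and> l = 0)"
      using \<open>l \<le> 2\<close> by arith
    then show ?thesis
      using pd_W2_eq_0 pd_W01_W10_eq_0 pd_W00_Z2_eq_0 assms(3) 2 by auto
  qed (use pd_W00_Z2_eq_0 assms(3) in auto)
qed

lemma alpha_zeta_eq_if_agree_off:
  assumes "finite D" "\<forall>c\<in>D. c \<noteq> Z1 \<and> \<not> zeta_slot N c"
    and "w \<in> B" "w' \<in> B" "\<forall>c. c \<notin> D \<longrightarrow> w c = w' c"
  shows "alpha_zeta w = alpha_zeta w'"
  using assms
proof (induction D arbitrary: w rule: finite_induct)
  case empty
  then have "w = w'" by auto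
  then show ?case by simp
next
  case (insert c D)
  define w1 where "w1 = w(c := w' c)"
  have "w1 \<in> B"
    using insert.prems(2,3) by (simp add: w1_def fun_upd_in_cylinder_iff) (simp add: cylinder_def)
  have "alpha_zeta w1 = alpha_zeta w"
    unfolding w1_def
    using pd_alpha_zeta_eq_0_if_free insert.prems(1,2) \<open>w1 \<in> B\<close>
    by (intro alpha_zeta_fun_upd_eq) (auto simp: w1_def)
  moreover have "alpha_zeta w1 = alpha_zeta w'"
  proof (rule insert.IH)
    show "\<forall>c\<in>D. c \<noteq> Z1 \<and> \<not> zeta_slot N c" using insert.prems(1) by blast
    show "\<forall>x. x \<notin> D \<longrightarrow> w1 x = w' x" using insert.prems(4) by (auto simp: w1_def)
  qed fact+
  ultimately show ?case by simp
qed

lemma alpha_zeta_eq_if_slots_eq: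
  assumes "w \<in> B" "w' \<in> B" "w Z1 = w' Z1" "\<And>c. zeta_slot N c \<Longrightarrow> w c = w' c"
  shows "alpha_zeta w = alpha_zeta w'"
proof -
  define w'' where "w'' = (\<lambda>x. if x \<in> jet_coords N then w' x else w x)"
  have "w'' \<in> B"
    unfolding w''_def by (rule if_in_cylinder[OF assms(2,1)])
  have "alpha_zeta w'' = alpha_zeta w'"
    using depends_upto_alpha_zeta unfolding depends_upto_def
    by (metis (mono_tags, lifting) mem_jet_coords w''_def)
  moreover have "alpha_zeta w = alpha_zeta w''"
    using assms(1,3,4) \<open>w'' \<in> B\<close>
    by (intro alpha_zeta_eq_if_agree_off[of "{x \<in> jet_coords N. w x \<noteq> w' x}"]) (auto simp: w''_def)
  ultimately show ?thesis by simp
qed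

lemma alpha_eq_alpha_zeta_section:
  assumes "q \<in> nondeg_jets" "to_zeta N q \<in> B" "to_zeta N p \<in> B" "N \<le> r"
  shows "zeta_section N p (zeta_args r q) \<in> U \<and> \<alpha> q = \<alpha> (zeta_section N p (zeta_args r q))"
proof -
  let ?s = "zeta_section N p (zeta_args r q)"
  have s: "to_zeta N ?s = (\<lambda>c. if c = Z1 \<or> zeta_slot N c then to_zeta N q c else to_zeta N p c)"
    by (rule to_zeta_zeta_section[OF assms(1,4)])
  have "to_zeta N ?s \<in> B"
    unfolding s by (rule if_in_cylinder[OF assms(2,3)])
  then have "?s \<in> U"
    using cylinder_subset by (auto simp: zeta_domain_def)
  moreover have "alpha_zeta (to_zeta N q) = alpha_zeta (to_zeta N ?s)"
    using assms(2) \<open>to_zeta N ?s \<in> B\<close> by (rule alpha_zeta_eq_if_slots_eq) (simp_all add: s)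
  ultimately show ?thesis
    by (simp add: alpha_eq_alpha_zeta[of q] alpha_eq_alpha_zeta[of ?s])
qed

end

lemma (in jet_function) locally_function_of_zeta_args:
  assumes "\<forall>p\<in>U. hatD2 N \<alpha> p = 0" "p \<in> U"
  shows "\<exists>V r F Om. open V \<and> p \<in> V \<and> V \<subseteq> U \<and> r \<ge> 1 \<and>
    open (Om :: ((nat \<times> nat) option \<Rightarrow> real) set) \<and> smooth_on Om F \<and>
    (\<forall>q\<in>V. zeta_args r q \<in> Om \<and> \<alpha> q = F (zeta_args r q))"
proof -
  obtain C e where C: "finite C" "e > 0" "cylinder C e (to_zeta N p) \<subseteq> zeta_domain"
    using open_contains_cylinder[OF open_zeta_domain to_zeta_in_zeta_domain[OF assms(2)]] by blast
  interpret D2_integral_on_cylinder N U \<alpha> C e "to_zeta N p"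
    by unfold_locales (use C assms(1) in auto)
  define V where "V = to_zeta N -` B \<inter> nondeg_jets"
  define r where "r = max 1 N"
  define Om where "Om = zeta_section N p -` U"
  have "open V"
    unfolding V_def using continuous_on_open_vimage[OF open_nondeg_jets] continuous_on_to_zeta
      open_cylinder[OF C(1)] by blast
  moreover have "p \<in> V"
    using assms(2) U_nondeg centre_in_cylinder[OF C(2)] by (auto simp: V_def)
  moreover have "V \<subseteq> U"
    using C(3) by (auto simp: V_def zeta_domain_def)
  moreover have "open Om"
    unfolding Om_def by (rule open_vimage[OF open_U continuous_on_zeta_section])
  moreover have "smooth_on Om (\<lambda>y. \<alpha> (zeta_section N p y))"
    unfolding Om_def
    by (rule smooth_on_comp_affine[OF continuous_on_zeta_section finite_jet_coords
          zeta_section_slope_outside zeta_section_fun_upd open_U smooth_\<alpha>])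
  moreover have "zeta_args r q \<in> Om \<and> \<alpha> q = \<alpha> (zeta_section N p (zeta_args r q))" if "q \<in> V" for q
    using alpha_eq_alpha_zeta_section[where q = q and p = p and r = r] that assms(2) U_nondeg
      centre_in_cylinder[OF C(2)]
    by (auto simp: V_def Om_def r_def)
  ultimately show ?thesis
    by (intro exI[of _ V] exI[of _ r] exI[of _ "\<lambda>y. \<alpha> (zeta_section N p y)"] exI[of _ Om])
      (auto simp: r_def)
qed

lemma (in jet_function) hatD2_eq_0_if_locally_function_of_zeta_args:
  assumes "\<exists>V r F Om. open V \<and> p \<in> V \<and> V \<subseteq> U \<and> r \<ge> 1 \<and>
    open (Om :: ((nat \<times> nat) option \<Rightarrow> real) set) \<and> smooth_on Om F \<and>
    (\<forall>q\<in>V. zeta_args r q \<in> Om \<and> \<alpha> q = F (zeta_args r q))"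
  shows "hatD2 N \<alpha> p = 0"
  using assms
proof (elim exE conjE)
  fix V r F and Om :: "((nat \<times> nat) option \<Rightarrow> real) set"
  assume "open V" "p \<in> V" "V \<subseteq> U" "open Om" "smooth_on Om F"
    "\<forall>q\<in>V. zeta_args r q \<in> Om \<and> \<alpha> q = F (zeta_args r q)"
  with U_nondeg show ?thesis
    by (intro hatD2_function_of_zeta_args[OF \<open>open V\<close> _ depends_\<alpha> \<open>open Om\<close>]) auto
qed

theorem theorem19:
  fixes \<alpha> :: "(coord \<Rightarrow> real) \<Rightarrow> real" and U :: "(coord \<Rightarrow> real) set" and N :: nat
  assumes "open U"
    and "U \<subseteq> {p. p (W 0 2) \<noteq> 0}"
    and "depends_upto N \<alpha>"
    and "smooth_on U \<alpha>"
  shows "(\<forall>p\<in>U. hatD2 N \<alpha> p = 0) \<longleftrightarrow>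
         (\<forall>p\<in>U. \<exists>V r F Om. open V \<and> p \<in> V \<and> V \<subseteq> U \<and> r \<ge> 1 \<and>
              open (Om :: ((nat \<times> nat) option \<Rightarrow> real) set) \<and> smooth_on Om F \<and>
              (\<forall>q\<in>V. zeta_args r q \<in> Om \<and> \<alpha> q = F (zeta_args r q)))"
proof -
  interpret jet_function N U \<alpha>
    using assms by unfold_locales (simp_all add: nondeg_jets_def)
  show ?thesis
    using locally_function_of_zeta_args hatD2_eq_0_if_locally_function_of_zeta_args
    by (intro iffI ballI) auto
qed

end
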